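(* Let $\mathcal A$ be a weakly idempotent complete additive category and let $M$ be a duplicial module in $\mathcal A$. For each $n\ge0$ let $N_n(M)$, $\iota_n:N_n(M)\to M_n$, $r_n:M_n\to N_n(M)$ be a splitting of the idempotent $p_n$ (so $r_n\iota_n=1$, $\iota_n r_n=p_n$), and define the restrictions $\kappa_n|_{N}=r_n\kappa_n\iota_n$ and $\pi_n|_{N}=r_n\pi_n\iota_n$, endomorphisms of $N_n(M)$. Then: (i) $M$ is paracyclic (i.e. $t_n$ is invertible for every $n\ge0$; equivalently $M$ extends to a functor $\Lambda_\infty^{op}\to\mathcal A$) if and only if $\kappa_n|_N$ is invertible for every $n\ge0$; (ii) $M$ is cyclic (i.e. $T_n=t_n^{n+1}=1_{M_n}$ for every $n\ge0$) if and only if $\pi_n|_N$ is the identity of $N_n(M)$ for every $n\ge0$.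
   Context: Let $\mathcal A$ be a pre-additive category (enriched in abelian groups). Let $\Lambda_\infty$ be the category with objects $[n]$, $n\ge0$, where $\Lambda_\infty([m],[n])$ is the set of weakly monotone maps $f:\mathbb Z\to\mathbb Z$ with $f(j+m+1)=f(j)+n+1$ for all $j$ (such $f$ is determined by its values on $\{0,\dots,m\}$). Let $\Lambda_+\subset\Lambda_\infty$ be the subcategory of those $f$ with $f(0)\ge0$, and $\Delta\subset\Lambda_+$ the subcategory of those $f$ with $f(0)\ge0$ and $f(m)\le n$. Define $\varepsilon^n_i:[n-1]\to[n]$ ($n\ge1$, $0\le i\le n$) by $\varepsilon^n_i(j)=j$ for $0\le j<i$, $\varepsilon^n_i(j)=j+1$ for $i\le j\le n-1$; $\eta^n_i:[n+1]\to[n]$ ($0\le i\le n+1$) by $\eta^n_i(j)=j$ for $0\le j\le i$, $\eta^n_i(j)=j-1$ for $i<j\le n+1$ (these lie in $\Delta$ for $i\le n$, and $\eta^n_{n+1}\in\Lambda_+$); and $\tau_n:[n]\to[n]$, $\tau_n(j)=j+1$, which equals $\eta^n_{n+1}\varepsilon^{n+1}_0$. $\Lambda_\infty$ is obtained from $\Lambda_+$ by inverting the $\tau_n$. A duplicial module is a functor $M:\Lambda_+^{op}\to\mathcal A$, a simplicial module a functor $\Delta^{op}\to\mathcal A$; a duplicial module restricts to a simplicial one. Write $M_n=M([n])$, $\partial_{n,i}=M(\varepsilon^n_i):M_n\to M_{n-1}$, $s_{n,i}=M(\eta^n_i):M_n\to M_{n+1}$, $t_n=M(\tau_n)=\partial_{n+1,0}s_{n,n+1}$,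 $T_n=t_n^{n+1}$. Convention: $M_{-1}=0$ and maps into or out of it are $0$. Operators: $p_n=(1-s_{n-1,0}\partial_{n,1})(1-s_{n-1,1}\partial_{n,2})\cdots(1-s_{n-1,n-1}\partial_{n,n})$ (an idempotent on $M_n$; $p_0=1$); Karoubi operator $\kappa_n=(-1)^n(\partial_{n+1,0}s_{n,n+1}-s_{n-1,n}\partial_{n,0})$ (so $\kappa_0=\partial_{1,0}s_{0,1}$); Dwyer–Kan operator $\pi_n=(-1)^n\partial_{n+1,0}\kappa_{n+1}^n s_{n,n+1}$. A pre-additive category is weakly idempotent complete if every morphism $f$ admitting a $g$ with $fg=1$ has a kernel. An idempotent $p$ on $A$ splits if there are $\iota:N\to A$, $r:A\to N$ with $r\iota=1_N$, $\iota r=p$. *)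

theory Defs
  imports Main
begin

record ('o, 'm) cat_data =
  c_ob  :: "'o set"
  c_ar  :: "'m set"
  c_dom :: "'m \<Rightarrow> 'o"
  c_cod :: "'m \<Rightarrow> 'o"
  c_cmp :: "'m \<Rightarrow> 'm \<Rightarrow> 'm"   (* c_cmp g f = g \<circ> f *)
  c_idt :: "'o \<Rightarrow> 'm"
  c_pls :: "'m \<Rightarrow> 'm \<Rightarrow> 'm"
  c_zer :: "'o \<Rightarrow> 'o \<Rightarrow> 'm"
  c_ngt :: "'m \<Rightarrow> 'm"

definition hom :: "('o, 'm) cat_data \<Rightarrow> 'o \<Rightarrow> 'o \<Rightarrow> 'm set" where
  "hom C a b = {f \<in> c_ar C. c_dom C f = a \<and> c_cod C f = b}"

definition msub :: "('o, 'm) cat_data \<Rightarrow> 'm \<Rightarrow> 'm \<Rightarrow> 'm" where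
  "msub C f g = c_pls C f (c_ngt C g)"

definition preadditive :: "('o, 'm) cat_data \<Rightarrow> bool" where
  "preadditive C \<longleftrightarrow>
     (\<forall>f \<in> c_ar C. c_dom C f \<in> c_ob C \<and> c_cod C f \<in> c_ob C)
   \<and> (\<forall>a \<in> c_ob C. c_idt C a \<in> hom C a a)
   \<and> (\<forall>a \<in> c_ob C. \<forall>b \<in> c_ob C. \<forall>c \<in> c_ob C. \<forall>f \<in> hom C a b. \<forall>g \<in> hom C b c.
         c_cmp C g f \<in> hom C a c)
   \<and> (\<forall>a \<in> c_ob C. \<forall>b \<in> c_ob C. \<forall>c \<in> c_ob C. \<forall>d \<in> c_ob C.
         \<forall>f \<in> hom C a b. \<forall>g \<in> hom C b c. \<forall>h \<in> hom C c d.
         c_cmp C h (c_cmp C g f) = c_cmp C (c_cmp C h g) f)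
   \<and> (\<forall>a \<in> c_ob C. \<forall>b \<in> c_ob C. \<forall>f \<in> hom C a b.
         c_cmp C f (c_idt C a) = f \<and> c_cmp C (c_idt C b) f = f)
   \<and> (\<forall>a \<in> c_ob C. \<forall>b \<in> c_ob C.
         c_zer C a b \<in> hom C a b
       \<and> (\<forall>f \<in> hom C a b. \<forall>g \<in> hom C a b. c_pls C f g \<in> hom C a b)
       \<and> (\<forall>f \<in> hom C a b. c_ngt C f \<in> hom C a b)
       \<and> (\<forall>f \<in> hom C a b. \<forall>g \<in> hom C a b. \<forall>h \<in> hom C a b.
             c_pls C (c_pls C f g) h = c_pls C f (c_pls C g h))
       \<and> (\<forall>f \<in> hom C a b. \<forall>g \<in> hom C a b. c_pls C f g = c_pls C g f)
       \<and> (\<forall>f \<in> hom C a b. c_pls C f (c_zer C a b) = f)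
       \<and> (\<forall>f \<in> hom C a b. c_pls C f (c_ngt C f) = c_zer C a b))
   \<and> (\<forall>a \<in> c_ob C. \<forall>b \<in> c_ob C. \<forall>c \<in> c_ob C.
         \<forall>f \<in> hom C a b. \<forall>f' \<in> hom C a b. \<forall>g \<in> hom C b c. \<forall>g' \<in> hom C b c.
           c_cmp C g (c_pls C f f') = c_pls C (c_cmp C g f) (c_cmp C g f')
         \<and> c_cmp C (c_pls C g g') f = c_pls C (c_cmp C g f) (c_cmp C g' f))"

definition is_biproduct :: "('o, 'm) cat_data \<Rightarrow> 'o \<Rightarrow> 'o \<Rightarrow> 'o \<Rightarrow> bool" where
  "is_biproduct C a b c \<longleftrightarrow> c \<in> c_ob C \<and>
     (\<exists>i1 \<in> hom C a c. \<exists>i2 \<in> hom C b c. \<exists>p1 \<in> hom C c a. \<exists>p2 \<in> hom C c b.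
        c_cmp C p1 i1 = c_idt C a \<and> c_cmp C p2 i2 = c_idt C b
      \<and> c_cmp C p1 i2 = c_zer C b a \<and> c_cmp C p2 i1 = c_zer C a b
      \<and> c_pls C (c_cmp C i1 p1) (c_cmp C i2 p2) = c_idt C c)"

definition is_zero_object :: "('o, 'm) cat_data \<Rightarrow> 'o \<Rightarrow> bool" where
  "is_zero_object C z \<longleftrightarrow> z \<in> c_ob C \<and>
     (\<forall>a \<in> c_ob C. (\<exists>!f. f \<in> hom C z a) \<and> (\<exists>!f. f \<in> hom C a z))"

definition additive_cat :: "('o, 'm) cat_data \<Rightarrow> bool" where
  "additive_cat C \<longleftrightarrow> preadditive C \<and> (\<exists>z. is_zero_object C z)
     \<and> (\<forall>a \<in> c_ob C. \<forall>b \<in> c_ob C. \<exists>c. is_biproduct C a b c)"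

definition is_kernel :: "('o, 'm) cat_data \<Rightarrow> 'm \<Rightarrow> 'o \<Rightarrow> 'm \<Rightarrow> bool" where
  "is_kernel C f K k \<longleftrightarrow> K \<in> c_ob C \<and> k \<in> hom C K (c_dom C f)
     \<and> c_cmp C f k = c_zer C K (c_cod C f)
     \<and> (\<forall>X \<in> c_ob C. \<forall>x \<in> hom C X (c_dom C f). c_cmp C f x = c_zer C X (c_cod C f) \<longrightarrow>
           (\<exists>!u. u \<in> hom C X K \<and> c_cmp C k u = x))"

definition weakly_idem_complete :: "('o, 'm) cat_data \<Rightarrow> bool" where
  "weakly_idem_complete C \<longleftrightarrow>
     (\<forall>f \<in> c_ar C. (\<exists>g \<in> hom C (c_cod C f) (c_dom C f). c_cmp C f g = c_idt C (c_cod C f))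
        \<longrightarrow> (\<exists>K k. is_kernel C f K k))"

definition invertible :: "('o, 'm) cat_data \<Rightarrow> 'o \<Rightarrow> 'm \<Rightarrow> bool" where
  "invertible C a h \<longleftrightarrow> h \<in> hom C a a \<and>
     (\<exists>g \<in> hom C a a. c_cmp C g h = c_idt C a \<and> c_cmp C h g = c_idt C a)"

fun mpow :: "('o, 'm) cat_data \<Rightarrow> 'o \<Rightarrow> 'm \<Rightarrow> nat \<Rightarrow> 'm" where
  "mpow C a h 0 = c_idt C a"
| "mpow C a h (Suc k) = c_cmp C h (mpow C a h k)"

definition msgn :: "('o, 'm) cat_data \<Rightarrow> nat \<Rightarrow> 'm \<Rightarrow> 'm" where
  "msgn C n f = (if even n then f else c_ngt C f)"

definition lam_inf :: "nat \<Rightarrow> nat \<Rightarrow> (int \<Rightarrow> int) \<Rightarrow> bool" where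
  "lam_inf m n f \<longleftrightarrow> mono f \<and> (\<forall>j. f (j + int m + 1) = f j + int n + 1)"

definition lam_plus :: "nat \<Rightarrow> nat \<Rightarrow> (int \<Rightarrow> int) \<Rightarrow> bool" where
  "lam_plus m n f \<longleftrightarrow> lam_inf m n f \<and> f 0 \<ge> 0"

text \<open>Periodic extension of g given on {0..m} to an element of \<Lambda>_\<infinity>([m],[n]).\<close>
definition lext :: "nat \<Rightarrow> nat \<Rightarrow> (int \<Rightarrow> int) \<Rightarrow> int \<Rightarrow> int" where
  "lext m n g j = g (j mod int (m + 1)) + (j div int (m + 1)) * int (n + 1)"

definition eps :: "nat \<Rightarrow> nat \<Rightarrow> int \<Rightarrow> int" where
  "eps n i = lext (n - 1) n (\<lambda>j. if j < int i then j else j + 1)"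

definition eta :: "nat \<Rightarrow> nat \<Rightarrow> int \<Rightarrow> int" where
  "eta n i = lext (n + 1) n (\<lambda>j. if j \<le> int i then j else j - 1)"

definition tau :: "nat \<Rightarrow> int \<Rightarrow> int" where
  "tau n = (\<lambda>j. j + 1)"

text \<open>A duplicial module: a functor \<Lambda>_+^op \<rightarrow> C, given by objects Mo n = M([n]) and,
  for f \<in> \<Lambda>_+([m],[n]), the morphism Mm m n f = M(f) : M_n \<rightarrow> M_m.\<close>
definition duplicial :: "('o, 'm) cat_data \<Rightarrow> (nat \<Rightarrow> 'o) \<Rightarrow> (nat \<Rightarrow> nat \<Rightarrow> (int \<Rightarrow> int) \<Rightarrow> 'm) \<Rightarrow> bool" where
  "duplicial C Mo Mm \<longleftrightarrow>
     (\<forall>n. Mo n \<in> c_ob C)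
   \<and> (\<forall>m n f. lam_plus m n f \<longrightarrow> Mm m n f \<in> hom C (Mo n) (Mo m))
   \<and> (\<forall>n. Mm n n id = c_idt C (Mo n))
   \<and> (\<forall>l m n f g. lam_plus l m f \<longrightarrow> lam_plus m n g \<longrightarrow>
        Mm l n (g \<circ> f) = c_cmp C (Mm l m f) (Mm m n g))"

definition face :: "(nat \<Rightarrow> nat \<Rightarrow> (int \<Rightarrow> int) \<Rightarrow> 'm) \<Rightarrow> nat \<Rightarrow> nat \<Rightarrow> 'm" where
  "face Mm n i = Mm (n - 1) n (eps n i)"   (* \<partial>_{n,i} : M_n \<rightarrow> M_{n-1}, n \<ge> 1 *)

definition degen :: "(nat \<Rightarrow> nat \<Rightarrow> (int \<Rightarrow> int) \<Rightarrow> 'm) \<Rightarrow> nat \<Rightarrow> nat \<Rightarrow> 'm" where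
  "degen Mm n i = Mm (n + 1) n (eta n i)"

definition tmap :: "(nat \<Rightarrow> nat \<Rightarrow> (int \<Rightarrow> int) \<Rightarrow> 'm) \<Rightarrow> nat \<Rightarrow> 'm" where
  "tmap Mm n = Mm n n (tau n)"

definition paracyclic :: "('o, 'm) cat_data \<Rightarrow> (nat \<Rightarrow> 'o) \<Rightarrow> (nat \<Rightarrow> nat \<Rightarrow> (int \<Rightarrow> int) \<Rightarrow> 'm) \<Rightarrow> bool" where
  "paracyclic C Mo Mm \<longleftrightarrow> (\<forall>n. invertible C (Mo n) (tmap Mm n))"

definition cyclic :: "('o, 'm) cat_data \<Rightarrow> (nat \<Rightarrow> 'o) \<Rightarrow> (nat \<Rightarrow> nat \<Rightarrow> (int \<Rightarrow> int) \<Rightarrow> 'm) \<Rightarrow> bool" where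
  "cyclic C Mo Mm \<longleftrightarrow> (\<forall>n. mpow C (Mo n) (tmap Mm n) (n + 1) = c_idt C (Mo n))"

definition pfac :: "('o, 'm) cat_data \<Rightarrow> (nat \<Rightarrow> 'o) \<Rightarrow> (nat \<Rightarrow> nat \<Rightarrow> (int \<Rightarrow> int) \<Rightarrow> 'm) \<Rightarrow> nat \<Rightarrow> nat \<Rightarrow> 'm" where
  "pfac C Mo Mm n i = msub C (c_idt C (Mo n)) (c_cmp C (degen Mm (n - 1) (i - 1)) (face Mm n i))"

fun pprod :: "('o, 'm) cat_data \<Rightarrow> (nat \<Rightarrow> 'o) \<Rightarrow> (nat \<Rightarrow> nat \<Rightarrow> (int \<Rightarrow> int) \<Rightarrow> 'm) \<Rightarrow> nat \<Rightarrow> nat \<Rightarrow> 'm" where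
  "pprod C Mo Mm n 0 = c_idt C (Mo n)"
| "pprod C Mo Mm n (Suc k) = c_cmp C (pprod C Mo Mm n k) (pfac C Mo Mm n (Suc k))"

definition pmap :: "('o, 'm) cat_data \<Rightarrow> (nat \<Rightarrow> 'o) \<Rightarrow> (nat \<Rightarrow> nat \<Rightarrow> (int \<Rightarrow> int) \<Rightarrow> 'm) \<Rightarrow> nat \<Rightarrow> 'm" where
  "pmap C Mo Mm n = pprod C Mo Mm n n"

text \<open>Karoubi operator; for n = 0 the term s_{-1,0}\<partial>_{0,0} is zero (M_{-1} = 0).\<close>
definition kappa :: "('o, 'm) cat_data \<Rightarrow> (nat \<Rightarrow> nat \<Rightarrow> (int \<Rightarrow> int) \<Rightarrow> 'm) \<Rightarrow> nat \<Rightarrow> 'm" where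
  "kappa C Mm n = msgn C n
     (if n = 0 then c_cmp C (face Mm 1 0) (degen Mm 0 1)
      else msub C (c_cmp C (face Mm (n + 1) 0) (degen Mm n (n + 1)))
                  (c_cmp C (degen Mm (n - 1) n) (face Mm n 0)))"

definition piop :: "('o, 'm) cat_data \<Rightarrow> (nat \<Rightarrow> 'o) \<Rightarrow> (nat \<Rightarrow> nat \<Rightarrow> (int \<Rightarrow> int) \<Rightarrow> 'm) \<Rightarrow> nat \<Rightarrow> 'm" where
  "piop C Mo Mm n = msgn C n
     (c_cmp C (face Mm (n + 1) 0)
        (c_cmp C (mpow C (Mo (n + 1)) (kappa C Mm (n + 1)) n) (degen Mm n (n + 1))))"

end

theory Submission
  imports Defs
begin

text \<open>
  Everything is compressed to the normalized part N by X \<mapsto> r X \<iota>. Write KN, tN, bN, sN for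
  the compressions of K = (-1)^n \<kappa>, of t, of the face d_0 and of the top degeneracy. The
  simplicial identities show that K preserves N and give, in each degree,
  bN sN = tN - (-1)^n, KN = tN - sN bN (n > 0), bN KN = - KN bN, sN KN = - KN sN and
  bN bN = 0 = sN sN; moreover the compression of \<pi> is the compression TN of T = t^(n+1),
  and TN = KN^n tN.

  Cyclic case: T commutes with the degeneracies, so if T = 1 in lower degrees then T - 1 factors
  through p_n, and it vanishes on N when TN = 1.

  Paracyclic case: T commutes with p_n, so t invertible gives T, TN and then KN invertible (KN
  commutes with tN). Conversely, if every KN is invertible, these relations make every tN
  invertible (1 + fg is invertible iff 1 + gf is); hence TN is invertible, and T is invertible
  by induction on n: an inverse of TN inverts T on the image of p_n, and an inverse of T in
  degree n - 1 inverts it on the degenerate part.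
\<close>

section \<open>The category \<Lambda>_+\<close>

lemma int_period_decomp:
  fixes x :: int
  obtains r q where "x = r + q * (int m + 1)" "0 \<le> r" "r \<le> int m"
proof
  show "x = x mod (int m + 1) + x div (int m + 1) * (int m + 1)" by (metis mod_div_mult_eq)
  show "0 \<le> x mod (int m + 1)" "x mod (int m + 1) \<le> int m"
    using pos_mod_bound[of "int m + 1" x] by auto
qed

lemma mono_int_stepI:
  fixes f :: "int \<Rightarrow> 'a::order"
  assumes "\<And>x. f x \<le> f (x + 1)"
  shows "mono f"
proof (rule monoI)
  fix x y :: int
  assume "x \<le> y"
  then show "f x \<le> f y"
    by (induction y rule: int_ge_induct) (auto intro: order_trans assms)
qed

lemma lam_inf_periodic_nat:
  assumes "lam_inf m n f"
  shows "f (j + int k * (int m + 1)) = f j + int k * (int n + 1)"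
proof (induction k arbitrary: j)
  case (Suc k)
  have "f (j + int (Suc k) * (int m + 1)) = f ((j + int k * (int m + 1)) + int m + 1)"
    by (simp add: algebra_simps)
  also have "\<dots> = f (j + int k * (int m + 1)) + int n + 1"
    using assms unfolding lam_inf_def by blast
  finally show ?case using Suc by (simp add: algebra_simps)
qed simp

lemma lam_inf_periodic:
  assumes "lam_inf m n f"
  shows "f (j + q * (int m + 1)) = f j + q * (int n + 1)"
proof (cases "q \<ge> 0")
  case True
  then show ?thesis using lam_inf_periodic_nat[OF assms, of j "nat q"] by simp
next
  case False
  then have "f ((j + q * (int m + 1)) + int (nat (- q)) * (int m + 1))
      = f (j + q * (int m + 1)) + int (nat (- q)) * (int n + 1)"
    using lam_inf_periodic_nat[OF assms] by blast
  then show ?thesis using False by (simp add: algebra_simps)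
qed

lemma lam_inf_eqI:
  assumes "lam_inf m n f" "lam_inf m n g" "\<And>j. 0 \<le> j \<Longrightarrow> j \<le> int m \<Longrightarrow> f j = g j"
  shows "f = g"
proof
  fix j :: int
  obtain r q where "j = r + q * (int m + 1)" "0 \<le> r" "r \<le> int m"
    by (rule int_period_decomp)
  then show "f j = g j"
    using lam_inf_periodic[OF assms(1)] lam_inf_periodic[OF assms(2)] assms(3) by metis
qed

lemma lam_inf_comp: "lam_inf l m f \<Longrightarrow> lam_inf m n g \<Longrightarrow> lam_inf l n (g \<circ> f)"
  unfolding lam_inf_def by (simp add: mono_def)

lemma lam_plus_comp:
  assumes "lam_plus l m f" "lam_plus m n g"
  shows "lam_plus l n (g \<circ> f)"
proof -
  have "g 0 \<le> g (f 0)" using assms unfolding lam_plus_def lam_inf_def mono_def by blast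
  then show ?thesis using assms lam_inf_comp unfolding lam_plus_def by auto
qed

lemma lam_plus_imp_lam_inf: "lam_plus m n f \<Longrightarrow> lam_inf m n f"
  unfolding lam_plus_def by simp

lemma lam_inf_commute_shift:
  "lam_inf m n f \<Longrightarrow> (\<lambda>x. x + int (Suc n)) \<circ> f = f \<circ> (\<lambda>x. x + int (Suc m))"
  unfolding lam_inf_def by (auto simp: fun_eq_iff ac_simps)

lemma lam_plus_shift: "lam_plus n n (\<lambda>x. x + int k)"
  unfolding lam_plus_def lam_inf_def by (auto simp: mono_def)

lemma lam_plus_tau: "lam_plus n n (tau n)"
  unfolding lam_plus_def lam_inf_def tau_def by (auto simp: mono_def)

lemma lam_plus_id: "lam_plus n n id"
  unfolding lam_plus_def lam_inf_def by (auto simp: mono_def)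

lemma shift_comp_tau: "(\<lambda>x. x + int k) \<circ> tau n = (\<lambda>x. x + int (Suc k))"
  unfolding tau_def by auto

lemma lext_periodic:
  assumes "0 \<le> x" "x \<le> int m"
  shows "lext m n g (x + q * (int m + 1)) = g x + q * (int n + 1)"
proof -
  have "(x + q * (int m + 1)) mod (int m + 1) = x" "(x + q * (int m + 1)) div (int m + 1) = q"
    using assms by simp_all
  then show ?thesis unfolding lext_def by (simp add: add.commute)
qed

lemma lext_base: "0 \<le> x \<Longrightarrow> x \<le> int m \<Longrightarrow> lext m n g x = g x"
  using lext_periodic[of x m n g 0] by simp

lemma lext_next_period:
  "int m + 1 \<le> x \<Longrightarrow> x \<le> 2 * int m + 1 \<Longrightarrow> lext m n g x = g (x - int m - 1) + int n + 1"
  using lext_periodic[of "x - int m - 1" m n g 1] by simp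

lemma lam_inf_lext:
  assumes mon: "\<And>i j. 0 \<le> i \<Longrightarrow> i \<le> j \<Longrightarrow> j \<le> int m \<Longrightarrow> g i \<le> g j"
    and top: "g (int m) \<le> g 0 + int n + 1"
  shows "lam_inf m n (lext m n g)"
  unfolding lam_inf_def
proof (intro conjI allI)
  fix x :: int
  obtain r q where x: "x = r + q * (int m + 1)" and r: "0 \<le> r" "r \<le> int m"
    by (rule int_period_decomp)
  have "x + int m + 1 = r + (q + 1) * (int m + 1)" using x by (simp add: algebra_simps)
  then have "lext m n g (x + int m + 1) = g r + (q + 1) * (int n + 1)"
    by (simp only: lext_periodic[OF r])
  moreover have "lext m n g x = g r + q * (int n + 1)"
    unfolding x by (rule lext_periodic[OF r])
  ultimately show "lext m n g (x + int m + 1) = lext m n g x + int n + 1"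
    by (simp add: algebra_simps)
next
  show "mono (lext m n g)"
  proof (rule mono_int_stepI)
    fix x :: int
    obtain r q where x: "x = r + q * (int m + 1)" and r: "0 \<le> r" "r \<le> int m"
      by (rule int_period_decomp)
    show "lext m n g x \<le> lext m n g (x + 1)"
    proof (cases "r < int m")
      case True
      then have "lext m n g (x + 1) = g (r + 1) + q * (int n + 1)"
        using x r lext_periodic[of "r + 1" m n g q] by (simp add: add.assoc add.commute)
      then show ?thesis using True x r mon[of r "r + 1"] lext_periodic[OF r] by simp
    next
      case False
      then have "r = int m" "x + 1 = 0 + (q + 1) * (int m + 1)"
        using r x by (simp_all add: algebra_simps)
      then show ?thesis
        using x top lext_periodic[of 0 m n g "q + 1"] lext_periodic[OF r]
        by (simp add: algebra_simps)
    qed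
  qed
qed

lemma lam_plus_eps_Suc: "lam_plus n (Suc n) (eps (Suc n) i)"
  unfolding lam_plus_def eps_def
  by (auto intro!: lam_inf_lext simp: lext_base)

lemma lam_plus_eta: "lam_plus (Suc n) n (eta n i)"
  unfolding lam_plus_def eta_def
  by (auto intro!: lam_inf_lext simp: lext_base)

lemmas lam_plus_intros = lam_plus_comp lam_plus_eps_Suc lam_plus_eta lam_plus_tau lam_plus_id

lemma eps_base:
  "0 \<le> x \<Longrightarrow> x \<le> int n \<Longrightarrow> eps (Suc n) i x = (if x < int i then x else x + 1)"
  unfolding eps_def by (subst lext_base) auto

lemma eps_next_period: "int n + 1 \<le> x \<Longrightarrow> x \<le> 2 * int n + 1 \<Longrightarrow>
   eps (Suc n) i x = (if x - int n - 1 < int i then x - int n - 1 else x - int n) + int n + 2"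
  unfolding eps_def by (subst lext_next_period) auto

lemma eta_base: "0 \<le> x \<Longrightarrow> x \<le> int n + 1 \<Longrightarrow> eta n i x = (if x \<le> int i then x else x - 1)"
  unfolding eta_def by (subst lext_base) auto

lemma eta_at_next_period: "eta n i (int n + 2) = int n + 1"
  unfolding eta_def by (subst lext_next_period) auto

lemma eta_top_eps_0: "eta n (Suc n) \<circ> eps (Suc n) 0 = tau n"
proof (rule lam_inf_eqI)
  fix x assume "0 \<le> x" "x \<le> int n"
  then show "(eta n (Suc n) \<circ> eps (Suc n) 0) x = tau n x"
    by (simp add: eps_base eta_base tau_def)
qed (auto intro!: lam_plus_imp_lam_inf lam_plus_intros)

lemma eps_eps_comp:
  assumes "i < j" "j \<le> Suc (Suc n)"
  shows "eps (Suc (Suc n)) j \<circ> eps (Suc n) i = eps (Suc (Suc n)) i \<circ> eps (Suc n) (j - 1)"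
  by (rule lam_inf_eqI)
    (use assms in \<open>auto intro!: lam_plus_imp_lam_inf lam_plus_intros simp: eps_base\<close>)

lemma eta_eps_comp_below:
  assumes "i < j" "j \<le> Suc (Suc n)" "\<not> (i = 0 \<and> j = Suc (Suc n))"
  shows "eta (Suc n) j \<circ> eps (Suc (Suc n)) i = eps (Suc n) i \<circ> eta n (j - 1)"
proof (rule lam_inf_eqI)
  fix x assume "0 \<le> x" "x \<le> int (Suc n)"
  then show "(eta (Suc n) j \<circ> eps (Suc (Suc n)) i) x = (eps (Suc n) i \<circ> eta n (j - 1)) x"
    using assms by (cases "x = int n + 1") (auto simp: eps_base eps_next_period eta_base)
qed (auto intro!: lam_plus_imp_lam_inf lam_plus_intros)

lemma eta_eps_comp_id:
  assumes "j \<le> Suc n" "i = j \<or> i = Suc j"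
  shows "eta n j \<circ> eps (Suc n) i = id"
  by (rule lam_inf_eqI)
    (use assms in \<open>auto intro!: lam_plus_imp_lam_inf lam_plus_intros simp: eps_base eta_base\<close>)

lemma eta_eps_comp_above:
  assumes "Suc j < i" "i \<le> Suc (Suc n)"
  shows "eta (Suc n) j \<circ> eps (Suc (Suc n)) i = eps (Suc n) (i - 1) \<circ> eta n j"
  by (rule lam_inf_eqI)
    (use assms in \<open>auto intro!: lam_plus_imp_lam_inf lam_plus_intros
      simp: eps_base eps_next_period eta_base\<close>)

lemma eta_eta_comp:
  assumes "i \<le> j" "j \<le> Suc n"
  shows "eta n j \<circ> eta (Suc n) i = eta n i \<circ> eta (Suc n) (Suc j)"
proof (rule lam_inf_eqI)
  fix x assume "0 \<le> x" "x \<le> int (Suc (Suc n))"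
  then show "(eta n j \<circ> eta (Suc n) i) x = (eta n i \<circ> eta (Suc n) (Suc j)) x"
    using assms by (cases "x = int n + 2") (auto simp: eta_base eta_at_next_period)
qed (auto intro!: lam_plus_imp_lam_inf lam_plus_intros)

section \<open>Pre-additive categories\<close>

locale preadditive_cat =
  fixes C :: "('o, 'm) cat_data"
  assumes preadditive: "preadditive C"
begin

abbreviation "ar f \<equiv> f \<in> c_ar C"
abbreviation "dm \<equiv> c_dom C"
abbreviation "cd \<equiv> c_cod C"
abbreviation "ob \<equiv> c_ob C"
abbreviation "cmp \<equiv> c_cmp C"
abbreviation "pls \<equiv> c_pls C"
abbreviation "ngt \<equiv> c_ngt C"
abbreviation "idt \<equiv> c_idt C"
abbreviation "zer \<equiv> c_zer C"

lemma hom_iff: "f \<in> hom C a b \<longleftrightarrow> ar f \<and> dm f = a \<and> cd f = b"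
  unfolding hom_def by auto

lemmas preadditive_conjs = preadditive[unfolded preadditive_def]

lemmas ob_closed = preadditive_conjs[THEN conjunct1]

lemmas idt_closed = preadditive_conjs[THEN conjunct2, THEN conjunct1]

lemmas cmp_closed = preadditive_conjs[THEN conjunct2, THEN conjunct2, THEN conjunct1]

lemmas assoc_ax = preadditive_conjs[THEN conjunct2, THEN conjunct2, THEN conjunct2, THEN conjunct1]

lemmas unit_ax = preadditive_conjs[THEN conjunct2, THEN conjunct2, THEN conjunct2, THEN conjunct2,
  THEN conjunct1]

lemmas group_ax = preadditive_conjs[THEN conjunct2, THEN conjunct2, THEN conjunct2, THEN conjunct2,
  THEN conjunct2, THEN conjunct1]

lemmas bilinear_ax = preadditive_conjs[THEN conjunct2, THEN conjunct2, THEN conjunct2,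
  THEN conjunct2, THEN conjunct2, THEN conjunct2]

lemma dom_ob[simp]: "ar f \<Longrightarrow> dm f \<in> ob"
  and cod_ob[simp]: "ar f \<Longrightarrow> cd f \<in> ob"
  using ob_closed by blast+

lemma idt_ty[simp]:
  "a \<in> ob \<Longrightarrow> ar (idt a)" "a \<in> ob \<Longrightarrow> dm (idt a) = a" "a \<in> ob \<Longrightarrow> cd (idt a) = a"
  using idt_closed by (auto simp: hom_iff)

lemma cmp_ty[simp]:
  "ar f \<Longrightarrow> ar g \<Longrightarrow> cd f = dm g \<Longrightarrow> ar (cmp g f)"
  "ar f \<Longrightarrow> ar g \<Longrightarrow> cd f = dm g \<Longrightarrow> dm (cmp g f) = dm f"
  "ar f \<Longrightarrow> ar g \<Longrightarrow> cd f = dm g \<Longrightarrow> cd (cmp g f) = cd g"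
  using cmp_closed[rule_format, of "dm f" "cd f" "cd g" f g] by (auto simp: hom_iff)

lemma cmp_assoc:
  "ar f \<Longrightarrow> ar g \<Longrightarrow> ar h \<Longrightarrow> cd f = dm g \<Longrightarrow> cd g = dm h \<Longrightarrow> cmp (cmp h g) f = cmp h (cmp g f)"
  using assoc_ax[rule_format, of "dm f" "dm g" "dm h" "cd h" f g h] by (auto simp: hom_iff)

lemma id_cmp: "ar f \<Longrightarrow> b = cd f \<Longrightarrow> cmp (idt b) f = f"
  and cmp_id: "ar f \<Longrightarrow> a = dm f \<Longrightarrow> cmp f (idt a) = f"
  using unit_ax[rule_format, of "dm f" "cd f" f] by (auto simp: hom_iff)

lemma zer_ty[simp]:
  "a \<in> ob \<Longrightarrow> b \<in> ob \<Longrightarrow> ar (zer a b)"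
  "a \<in> ob \<Longrightarrow> b \<in> ob \<Longrightarrow> dm (zer a b) = a"
  "a \<in> ob \<Longrightarrow> b \<in> ob \<Longrightarrow> cd (zer a b) = b"
  using group_ax by (auto simp: hom_iff)

lemma pls_ty[simp]:
  "ar f \<Longrightarrow> ar g \<Longrightarrow> dm f = dm g \<Longrightarrow> cd f = cd g \<Longrightarrow> ar (pls f g)"
  "ar f \<Longrightarrow> ar g \<Longrightarrow> dm f = dm g \<Longrightarrow> cd f = cd g \<Longrightarrow> dm (pls f g) = dm f"
  "ar f \<Longrightarrow> ar g \<Longrightarrow> dm f = dm g \<Longrightarrow> cd f = cd g \<Longrightarrow> cd (pls f g) = cd f"
  using group_ax[rule_format, of "dm f" "cd f"] by (auto simp: hom_iff)

lemma ngt_ty[simp]: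
  "ar f \<Longrightarrow> ar (ngt f)" "ar f \<Longrightarrow> dm (ngt f) = dm f" "ar f \<Longrightarrow> cd (ngt f) = cd f"
  using group_ax[rule_format, of "dm f" "cd f"] by (auto simp: hom_iff)

lemma pls_assoc:
  "ar f \<Longrightarrow> ar g \<Longrightarrow> ar h \<Longrightarrow> dm f = dm g \<Longrightarrow> cd f = cd g \<Longrightarrow> dm h = dm f \<Longrightarrow> cd h = cd f
   \<Longrightarrow> pls (pls f g) h = pls f (pls g h)"
  using group_ax[rule_format, of "dm f" "cd f"] by (auto simp: hom_iff)

lemma pls_comm: "ar f \<Longrightarrow> ar g \<Longrightarrow> dm f = dm g \<Longrightarrow> cd f = cd g \<Longrightarrow> pls f g = pls g f"
  using group_ax[rule_format, of "dm f" "cd f"] by (auto simp: hom_iff)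

lemma pls_zer: "ar f \<Longrightarrow> a = dm f \<Longrightarrow> b = cd f \<Longrightarrow> pls f (zer a b) = f"
  using group_ax[rule_format, of "dm f" "cd f"] by (auto simp: hom_iff)

lemma pls_ngt: "ar f \<Longrightarrow> pls f (ngt f) = zer (dm f) (cd f)"
  using group_ax[rule_format, of "dm f" "cd f"] by (auto simp: hom_iff)

lemma cmp_pls_distrib:
  "ar f \<Longrightarrow> ar f' \<Longrightarrow> ar g \<Longrightarrow> dm f = dm f' \<Longrightarrow> cd f = cd f' \<Longrightarrow> cd f = dm g \<Longrightarrow>
   cmp g (pls f f') = pls (cmp g f) (cmp g f')"
  using bilinear_ax[rule_format, of "dm f" "cd f" "cd g" f f' g g] by (auto simp: hom_iff)

lemma pls_cmp_distrib:
  "ar f \<Longrightarrow> ar g \<Longrightarrow> ar g' \<Longrightarrow> dm g = dm g' \<Longrightarrow> cd g = cd g' \<Longrightarrow> cd f = dm g \<Longrightarrow>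
   cmp (pls g g') f = pls (cmp g f) (cmp g' f)"
  using bilinear_ax[rule_format, of "dm f" "cd f" "cd g" f f g g'] by (auto simp: hom_iff)

lemma zer_pls: "ar f \<Longrightarrow> a = dm f \<Longrightarrow> b = cd f \<Longrightarrow> pls (zer a b) f = f"
  by (simp add: pls_comm pls_zer)

lemma pls_left_cancel:
  assumes "ar f" "ar g" "ar h" "dm f = dm g" "cd f = cd g" "dm h = dm f" "cd h = cd f"
    "pls h f = pls h g" shows "f = g"
proof -
  have "f = pls (pls (ngt h) h) f" using assms by (simp add: pls_comm[of "ngt h" h] pls_ngt zer_pls)
  also have "\<dots> = pls (ngt h) (pls h f)" using assms by (simp add: pls_assoc)
  also have "\<dots> = pls (ngt h) (pls h g)" using assms by simp
  also have "\<dots> = pls (pls (ngt h) h) g" using assms by (simp add: pls_assoc)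
  also have "\<dots> = g" using assms by (simp add: pls_comm[of "ngt h" h] pls_ngt zer_pls)
  finally show ?thesis .
qed

lemma ngt_unique: "ar f \<Longrightarrow> ar g \<Longrightarrow> dm f = dm g \<Longrightarrow> cd f = cd g \<Longrightarrow>
   pls f g = zer (dm f) (cd f) \<Longrightarrow> g = ngt f"
  by (rule pls_left_cancel[of g "ngt f" f]) (simp_all add: pls_ngt)

lemma ngt_ngt[simp]: "ar f \<Longrightarrow> ngt (ngt f) = f"
  by (metis ngt_ty ngt_unique pls_comm pls_ngt)

lemma ngt_pls: "ar f \<Longrightarrow> ar g \<Longrightarrow> dm f = dm g \<Longrightarrow> cd f = cd g \<Longrightarrow> ngt (pls f g) = pls (ngt f) (ngt g)"
proof -
  assume a: "ar f" "ar g" "dm f = dm g" "cd f = cd g"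
  have "pls (pls f g) (pls (ngt f) (ngt g)) = pls (pls f (ngt f)) (pls g (ngt g))"
    using a
    by (simp add: pls_assoc pls_comm[of "ngt f" "pls g (ngt g)"] pls_comm[of "ngt f" "ngt g"])
  also have "\<dots> = zer (dm f) (cd f)" using a by (simp add: pls_ngt pls_zer)
  finally show ?thesis using a by (intro ngt_unique[symmetric]) auto
qed

lemma cmp_zer: "ar g \<Longrightarrow> a \<in> ob \<Longrightarrow> b = dm g \<Longrightarrow> cmp g (zer a b) = zer a (cd g)"
proof -
  assume a: "ar g" "a \<in> ob" "b = dm g"
  have "pls (cmp g (zer a b)) (cmp g (zer a b)) = cmp g (pls (zer a b) (zer a b))"
    using a by (simp add: cmp_pls_distrib)
  also have "\<dots> = cmp g (zer a b)" using a by (simp add: pls_zer)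
  finally have e: "pls (cmp g (zer a b)) (cmp g (zer a b)) = pls (cmp g (zer a b)) (zer a (cd g))"
    using a by (simp add: pls_zer)
  show ?thesis by (rule pls_left_cancel[OF _ _ _ _ _ _ _ e]) (use a in auto)
qed

lemma zer_cmp: "ar f \<Longrightarrow> c \<in> ob \<Longrightarrow> b = cd f \<Longrightarrow> cmp (zer b c) f = zer (dm f) c"
proof -
  assume a: "ar f" "c \<in> ob" "b = cd f"
  have "pls (cmp (zer b c) f) (cmp (zer b c) f) = cmp (pls (zer b c) (zer b c)) f"
    using a by (simp add: pls_cmp_distrib)
  also have "\<dots> = cmp (zer b c) f" using a by (simp add: pls_zer)
  finally have e: "pls (cmp (zer b c) f) (cmp (zer b c) f) = pls (cmp (zer b c) f) (zer (dm f) c)"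
    using a by (simp add: pls_zer)
  show ?thesis by (rule pls_left_cancel[OF _ _ _ _ _ _ _ e]) (use a in auto)
qed

lemma cmp_ngt: "ar f \<Longrightarrow> ar g \<Longrightarrow> cd f = dm g \<Longrightarrow> cmp g (ngt f) = ngt (cmp g f)"
proof -
  assume a: "ar f" "ar g" "cd f = dm g"
  have "pls (cmp g f) (cmp g (ngt f)) = cmp g (pls f (ngt f))"
    using a by (simp add: cmp_pls_distrib)
  also have "\<dots> = zer (dm f) (cd g)" using a by (simp add: pls_ngt cmp_zer)
  finally show ?thesis using a by (intro ngt_unique) auto
qed

lemma ngt_cmp: "ar f \<Longrightarrow> ar g \<Longrightarrow> cd f = dm g \<Longrightarrow> cmp (ngt g) f = ngt (cmp g f)"
proof -
  assume a: "ar f" "ar g" "cd f = dm g"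
  have "pls (cmp g f) (cmp (ngt g) f) = cmp (pls g (ngt g)) f"
    using a by (simp add: pls_cmp_distrib)
  also have "\<dots> = zer (dm f) (cd g)" using a by (simp add: pls_ngt zer_cmp)
  finally show ?thesis using a by (intro ngt_unique) auto
qed

lemma ngt_zer: "a \<in> ob \<Longrightarrow> b \<in> ob \<Longrightarrow> ngt (zer a b) = zer a b"
  by (metis ngt_ngt ngt_ty(1) ngt_ty(2) ngt_ty(3) pls_ngt zer_pls zer_ty)

lemma msub_ty[simp]:
  "ar f \<Longrightarrow> ar g \<Longrightarrow> dm f = dm g \<Longrightarrow> cd f = cd g \<Longrightarrow> ar (msub C f g)"
  "ar f \<Longrightarrow> ar g \<Longrightarrow> dm f = dm g \<Longrightarrow> cd f = cd g \<Longrightarrow> dm (msub C f g) = dm f"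
  "ar f \<Longrightarrow> ar g \<Longrightarrow> dm f = dm g \<Longrightarrow> cd f = cd g \<Longrightarrow> cd (msub C f g) = cd f"
  unfolding msub_def by auto

lemma msgn_ty[simp]:
  "ar f \<Longrightarrow> ar (msgn C n f)" "ar f \<Longrightarrow> dm (msgn C n f) = dm f" "ar f \<Longrightarrow> cd (msgn C n f) = cd f"
  unfolding msgn_def by auto

lemma mpow_ty[simp]:
  "ar h \<Longrightarrow> dm h = a \<Longrightarrow> cd h = a \<Longrightarrow> ar (mpow C a h k)"
  "ar h \<Longrightarrow> dm h = a \<Longrightarrow> cd h = a \<Longrightarrow> dm (mpow C a h k) = a"
  "ar h \<Longrightarrow> dm h = a \<Longrightarrow> cd h = a \<Longrightarrow> cd (mpow C a h k) = a"
  by (induction k) auto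

lemma cmp_sub_distrib: "ar f \<Longrightarrow> ar f' \<Longrightarrow> ar g \<Longrightarrow> dm f = dm f' \<Longrightarrow> cd f = cd f' \<Longrightarrow> cd f = dm g \<Longrightarrow>
   cmp g (msub C f f') = msub C (cmp g f) (cmp g f')"
  unfolding msub_def by (simp add: cmp_pls_distrib cmp_ngt)

lemma sub_cmp_distrib: "ar f \<Longrightarrow> ar g \<Longrightarrow> ar g' \<Longrightarrow> dm g = dm g' \<Longrightarrow> cd g = cd g' \<Longrightarrow> cd f = dm g \<Longrightarrow>
   cmp (msub C g g') f = msub C (cmp g f) (cmp g' f)"
  unfolding msub_def by (simp add: pls_cmp_distrib ngt_cmp)

lemma msgn_cmp: "ar f \<Longrightarrow> ar g \<Longrightarrow> cd f = dm g \<Longrightarrow> cmp (msgn C n g) f = msgn C n (cmp g f)"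
  unfolding msgn_def by (simp add: ngt_cmp)

lemma cmp_msgn: "ar f \<Longrightarrow> ar g \<Longrightarrow> cd f = dm g \<Longrightarrow> cmp g (msgn C n f) = msgn C n (cmp g f)"
  unfolding msgn_def by (simp add: cmp_ngt)

lemma msgn_0[simp]: "msgn C 0 f = f" unfolding msgn_def by simp

lemma msgn_msgn[simp]: "ar f \<Longrightarrow> msgn C n (msgn C n f) = f" unfolding msgn_def by auto

lemma msgn_Suc: "ar f \<Longrightarrow> msgn C (Suc n) f = ngt (msgn C n f)" unfolding msgn_def by simp

lemma msgn_even: "even n \<Longrightarrow> msgn C n f = f" unfolding msgn_def by simp

lemma sub_self: "ar f \<Longrightarrow> msub C f f = zer (dm f) (cd f)" unfolding msub_def by (simp add: pls_ngt)

lemma sub_zer: "ar f \<Longrightarrow> a = dm f \<Longrightarrow> b = cd f \<Longrightarrow> msub C f (zer a b) = f"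
  unfolding msub_def by (simp add: ngt_zer pls_zer)

lemma zer_sub: "ar f \<Longrightarrow> a = dm f \<Longrightarrow> b = cd f \<Longrightarrow> msub C (zer a b) f = ngt f"
  unfolding msub_def by (simp add: zer_pls)

lemmas cat_simps = cmp_assoc cmp_sub_distrib sub_cmp_distrib cmp_pls_distrib pls_cmp_distrib
  msgn_cmp cmp_msgn ngt_cmp cmp_ngt id_cmp cmp_id zer_cmp cmp_zer

lemma cmp_eq_whisker:
  "cmp a b = cmp c e \<Longrightarrow> ar x \<Longrightarrow> ar a \<Longrightarrow> ar b \<Longrightarrow> ar c \<Longrightarrow> ar e \<Longrightarrow> cd b = dm a \<Longrightarrow>
   cd e = dm c \<Longrightarrow> cd x = dm b \<Longrightarrow> dm b = dm e \<Longrightarrow> cmp a (cmp b x) = cmp c (cmp e x)"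
  by (metis cmp_assoc)

lemma pls_lcomm: "ar f \<Longrightarrow> ar g \<Longrightarrow> ar h \<Longrightarrow> dm f = dm g \<Longrightarrow> cd f = cd g \<Longrightarrow> dm h = dm f \<Longrightarrow> cd h = cd f
   \<Longrightarrow> pls f (pls g h) = pls g (pls f h)"
  by (metis pls_assoc pls_comm pls_ty(1,2,3))

lemmas pls_ac = pls_assoc pls_comm pls_lcomm

lemma msgn_pls: "ar f \<Longrightarrow> ar g \<Longrightarrow> dm f = dm g \<Longrightarrow> cd f = cd g \<Longrightarrow>
  msgn C n (pls f g) = pls (msgn C n f) (msgn C n g)"
  unfolding msgn_def by (simp add: ngt_pls)

lemma sub_pls_cancel: "ar x \<Longrightarrow> ar y \<Longrightarrow> dm x = dm y \<Longrightarrow> cd x = cd y \<Longrightarrow> pls (msub C x y) y = x"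
  unfolding msub_def
  by (simp add: pls_assoc pls_comm[of "ngt y" y] pls_ngt pls_zer)

lemma pls_sub_cancel: "ar x \<Longrightarrow> ar y \<Longrightarrow> dm x = dm y \<Longrightarrow> cd x = cd y \<Longrightarrow> pls x (msub C y x) = y"
  by (subst pls_comm) (simp_all add: sub_pls_cancel)

lemma sub_eq_zero_imp_eq:
  "ar x \<Longrightarrow> ar y \<Longrightarrow> dm x = dm y \<Longrightarrow> cd x = cd y \<Longrightarrow> msub C x y = zer (dm x) (cd x) \<Longrightarrow> x = y"
  by (metis sub_pls_cancel zer_pls)

lemma mpow_cmp_commute: "ar h \<Longrightarrow> dm h = a \<Longrightarrow> cd h = a \<Longrightarrow> cmp (mpow C a h k) h = cmp h (mpow C a h k)"
  by (induction k) (auto simp: id_cmp cmp_id cmp_assoc)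

lemma mpow_msgn:
  "ar h \<Longrightarrow> dm h = a \<Longrightarrow> cd h = a \<Longrightarrow> mpow C a (msgn C j h) k = msgn C (j * k) (mpow C a h k)"
proof (induction k)
  case 0 then show ?case by simp
next
  case (Suc k)
  have "mpow C a (msgn C j h) (Suc k) = cmp (msgn C j h) (msgn C (j * k) (mpow C a h k))"
    using Suc by simp
  also have "\<dots> = msgn C j (msgn C (j * k) (cmp h (mpow C a h k)))"
    using Suc by (simp add: msgn_cmp cmp_msgn) (auto simp: msgn_def)
  also have "\<dots> = msgn C (j * Suc k) (mpow C a h (Suc k))" using Suc unfolding msgn_def by auto
  finally show ?case .
qed

lemma invertibleI:
  assumes "h \<in> hom C a a" "l \<in> hom C a a" "q \<in> hom C a a" "cmp l h = idt a" "cmp h q = idt a"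
  shows "invertible C a h"
proof -
  have "l = cmp l (cmp h q)" using assms by (simp add: cmp_id hom_iff)
  also have "\<dots> = cmp (cmp l h) q" by (rule cmp_assoc[symmetric]) (use assms in \<open>auto simp: hom_iff\<close>)
  also have "\<dots> = q" using assms by (simp add: id_cmp hom_iff)
  finally show ?thesis using assms unfolding invertible_def by auto
qed

lemma invertible_msgn: "ar h \<Longrightarrow> invertible C a (msgn C n h) \<longleftrightarrow> invertible C a h"
proof -
  have *: "invertible C a (msgn C n h)" if inv: "invertible C a h" "ar h" for h
  proof -
    obtain g where g: "g \<in> hom C a a" "cmp g h = idt a" "cmp h g = idt a" "h \<in> hom C a a"
      using inv unfolding invertible_def by blast
    show ?thesis unfolding invertible_def
      by (rule conjI, simp add: hom_iff g(4)[unfolded hom_iff], rule bexI[of _ "msgn C n g"])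
        (use g in \<open>auto simp: msgn_cmp cmp_msgn hom_iff\<close>)
  qed
  assume "ar h"
  then show ?thesis using *[of h] *[of "msgn C n h"] by auto
qed

lemma invertible_cmp:
  assumes "invertible C a x" "invertible C a y" shows "invertible C a (cmp x y)"
proof -
  obtain g where g: "g \<in> hom C a a" "cmp g x = idt a" "cmp x g = idt a" "x \<in> hom C a a"
    using assms unfolding invertible_def by blast
  obtain g' where g': "g' \<in> hom C a a" "cmp g' y = idt a" "cmp y g' = idt a" "y \<in> hom C a a"
    using assms unfolding invertible_def by blast
  show ?thesis
  proof (rule invertibleI[of _ _ "cmp g' g" "cmp g' g"])
    show "cmp (cmp g' g) (cmp x y) = idt a" using g g'
      by (simp add: hom_iff cmp_assoc) (simp add: cmp_assoc[symmetric] id_cmp)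
    show "cmp (cmp x y) (cmp g' g) = idt a" using g g'
      by (simp add: hom_iff cmp_assoc) (simp add: cmp_assoc[symmetric] id_cmp)
  qed (use g g' in \<open>auto simp: hom_iff\<close>)
qed

lemma invertible_id: "a \<in> ob \<Longrightarrow> invertible C a (idt a)"
  unfolding invertible_def by (auto simp: hom_iff id_cmp intro!: bexI[of _ "idt a"])

lemma invertible_mpow: "invertible C a h \<Longrightarrow> invertible C a (mpow C a h k)"
proof (induction k)
  case 0
  then have "a \<in> ob" unfolding invertible_def hom_iff by auto
  then show ?case by (simp add: invertible_id)
next
  case (Suc k) then show ?case by (simp add: invertible_cmp)
qed

lemma invertible_commuting_factor:
  assumes "x \<in> hom C a a" "y \<in> hom C a a" "cmp x y = z" "cmp y x = z" "invertible C a z"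
  shows "invertible C a x"
proof -
  obtain g where g: "g \<in> hom C a a" "cmp g z = idt a" "cmp z g = idt a" "z \<in> hom C a a"
    using assms unfolding invertible_def by blast
  show ?thesis
  proof (rule invertibleI[of _ _ "cmp g y" "cmp y g"])
    show "cmp (cmp g y) x = idt a" using assms g by (simp add: hom_iff cmp_assoc)
    show "cmp x (cmp y g) = idt a" using assms g by (simp add: hom_iff cmp_assoc[symmetric])
  qed (use assms g in \<open>auto simp: hom_iff\<close>)
qed

lemma invertible_one_plus_swap:
  assumes f: "f \<in> hom C a c" and g: "g \<in> hom C c a"
    and inv: "invertible C c (pls (idt c) (cmp f g))"
  shows "invertible C a (pls (idt a) (cmp g f))"
proof -
  obtain W where W: "W \<in> hom C c c"
      "cmp W (pls (idt c) (cmp f g)) = idt c" "cmp (pls (idt c) (cmp f g)) W = idt c"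
    using inv unfolding invertible_def by blast
  have ty: "ar f" "ar g" "ar W" "dm f = a" "cd f = c" "dm g = c" "cd g = a" "dm W = c" "cd W = c"
    using f g W by (auto simp: hom_iff)
  have a: "a \<in> ob" "c \<in> ob" using ty by (metis dom_ob)+
  let ?V = "msub C (idt a) (cmp g (cmp W f))"
  show ?thesis
  proof (rule invertibleI[of _ _ ?V ?V])
    have "cmp (pls (idt a) (cmp g f)) ?V
      = msub C (pls (idt a) (cmp g f)) (cmp g (cmp (pls (idt c) (cmp f g)) (cmp W f)))"
      using ty a unfolding msub_def by (simp add: cat_simps ngt_pls pls_ac)
    also have "cmp (pls (idt c) (cmp f g)) (cmp W f) = f"
      using W(3) ty a by (simp add: cmp_assoc[symmetric] id_cmp)
    finally show "cmp (pls (idt a) (cmp g f)) ?V = idt a"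
      using ty a unfolding msub_def by (simp add: pls_assoc pls_ngt pls_zer)
    have "cmp ?V (pls (idt a) (cmp g f))
      = msub C (pls (idt a) (cmp g f)) (cmp g (cmp (cmp W (pls (idt c) (cmp f g))) f))"
      using ty a unfolding msub_def by (simp add: cat_simps ngt_pls pls_ac)
    also have "cmp W (pls (idt c) (cmp f g)) = idt c" by (rule W(2))
    finally show "cmp ?V (pls (idt a) (cmp g f)) = idt a"
      using ty a unfolding msub_def by (simp add: pls_assoc pls_ngt pls_zer id_cmp)
  qed (use ty a in \<open>auto simp: hom_iff\<close>)
qed

lemma retract_commuting_iota:
  assumes hom: "iota \<in> hom C b a" "r \<in> hom C a b" "x \<in> hom C a a"
    and retr: "cmp r iota = idt b" and comm: "cmp x (cmp iota r) = cmp (cmp iota r) x"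
  shows "cmp x iota = cmp iota (cmp r (cmp x iota))"
proof -
  have "cmp x iota = cmp (cmp x (cmp iota r)) iota"
    using hom retr by (simp add: hom_iff cmp_assoc cmp_id)
  then show ?thesis unfolding comm using hom by (simp add: hom_iff cmp_assoc)
qed

lemma retract_commuting_r:
  assumes hom: "iota \<in> hom C b a" "r \<in> hom C a b" "x \<in> hom C a a"
    and retr: "cmp r iota = idt b" and comm: "cmp x (cmp iota r) = cmp (cmp iota r) x"
  shows "cmp r x = cmp (cmp r (cmp x iota)) r"
proof -
  have "cmp (cmp r (cmp x iota)) r = cmp r (cmp (cmp iota r) x)"
    unfolding comm[symmetric] using hom by (simp add: hom_iff cmp_assoc)
  also have "\<dots> = cmp (cmp r iota) (cmp r x)"
    using hom by (simp add: hom_iff cmp_assoc)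
  finally show ?thesis using hom retr by (simp add: hom_iff id_cmp)
qed

lemma invertible_restriction:
  assumes hom: "iota \<in> hom C b a" "r \<in> hom C a b" "x \<in> hom C a a"
    and retr: "cmp r iota = idt b" and comm: "cmp x (cmp iota r) = cmp (cmp iota r) x"
    and inv: "invertible C a x"
  shows "invertible C b (cmp r (cmp x iota))"
proof -
  obtain g where g: "g \<in> hom C a a" "cmp g x = idt a" "cmp x g = idt a"
    using inv unfolding invertible_def by blast
  have ty: "ar iota" "ar r" "ar x" "ar g" "dm iota = b" "cd iota = a" "dm r = a" "cd r = b"
    "dm x = a" "cd x = a" "dm g = a" "cd g = a"
    using hom g by (auto simp: hom_iff)
  let ?v = "cmp r (cmp g iota)"
  show ?thesis
  proof (rule invertibleI[of _ _ ?v ?v])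
    have "cmp ?v (cmp r (cmp x iota)) = cmp r (cmp g (cmp iota (cmp r (cmp x iota))))"
      using ty by (simp add: cmp_assoc)
    also have "cmp iota (cmp r (cmp x iota)) = cmp x iota"
      using retract_commuting_iota[OF hom retr comm] ..
    also have "cmp r (cmp g (cmp x iota)) = cmp r (cmp (cmp g x) iota)"
      using ty by (simp add: cmp_assoc)
    finally show "cmp ?v (cmp r (cmp x iota)) = idt b"
      using ty g retr by (simp add: id_cmp)
    have "cmp (cmp r (cmp x iota)) ?v = cmp (cmp (cmp r (cmp x iota)) r) (cmp g iota)"
      using ty by (simp add: cmp_assoc)
    also have "cmp (cmp r (cmp x iota)) r = cmp r x"
      using retract_commuting_r[OF hom retr comm] ..
    also have "cmp (cmp r x) (cmp g iota) = cmp r (cmp (cmp x g) iota)"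
      using ty by (simp add: cmp_assoc)
    finally show "cmp (cmp r (cmp x iota)) ?v = idt b"
      using ty g retr by (simp add: id_cmp)
  qed (use ty in \<open>auto simp: hom_iff\<close>)
qed

lemma inverse_of_restriction:
  assumes hom: "iota \<in> hom C b a" "r \<in> hom C a b" "x \<in> hom C a a" "w \<in> hom C b b"
    and retr: "cmp r iota = idt b" and comm: "cmp x (cmp iota r) = cmp (cmp iota r) x"
    and w: "cmp w (cmp r (cmp x iota)) = idt b" "cmp (cmp r (cmp x iota)) w = idt b"
  shows "cmp x (cmp iota (cmp w r)) = cmp iota r"
    and "cmp (cmp iota (cmp w r)) x = cmp iota r"
proof -
  have ty: "ar iota" "ar r" "ar x" "ar w" "dm iota = b" "cd iota = a" "dm r = a" "cd r = b"
    "dm x = a" "cd x = a" "dm w = b" "cd w = b"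
    using hom by (auto simp: hom_iff)
  have "cmp x (cmp iota (cmp w r)) = cmp (cmp x iota) (cmp w r)"
    using ty by (simp add: cmp_assoc)
  also have "cmp x iota = cmp iota (cmp r (cmp x iota))"
    by (rule retract_commuting_iota[OF hom(1-3) retr comm])
  also have "cmp (cmp iota (cmp r (cmp x iota))) (cmp w r)
      = cmp iota (cmp (cmp (cmp r (cmp x iota)) w) r)"
    using ty by (simp add: cmp_assoc)
  finally show "cmp x (cmp iota (cmp w r)) = cmp iota r"
    using ty w by (simp add: id_cmp)
  have "cmp (cmp iota (cmp w r)) x = cmp iota (cmp w (cmp r x))"
    using ty by (simp add: cmp_assoc)
  also have "cmp r x = cmp (cmp r (cmp x iota)) r"
    by (rule retract_commuting_r[OF hom(1-3) retr comm])
  also have "cmp iota (cmp w (cmp (cmp r (cmp x iota)) r))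
      = cmp iota (cmp (cmp w (cmp r (cmp x iota))) r)"
    using ty by (simp add: cmp_assoc)
  finally show "cmp (cmp iota (cmp w r)) x = cmp iota r"
    using ty w by (simp add: id_cmp)
qed

end

section \<open>Duplicial modules with a split normalization idempotent\<close>

locale split_duplicial = preadditive_cat C for C :: "('o, 'm) cat_data" +
  fixes Mo :: "nat \<Rightarrow> 'o" and Mm :: "nat \<Rightarrow> nat \<Rightarrow> (int \<Rightarrow> int) \<Rightarrow> 'm"
    and N :: "nat \<Rightarrow> 'o" and iota :: "nat \<Rightarrow> 'm" and r :: "nat \<Rightarrow> 'm"
  assumes duplicial: "duplicial C Mo Mm"
    and splitting: "\<forall>n. N n \<in> c_ob C \<and> iota n \<in> hom C (N n) (Mo n) \<and> r n \<in> hom C (Mo n) (N n)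
              \<and> c_cmp C (r n) (iota n) = c_idt C (N n)
              \<and> c_cmp C (iota n) (r n) = pmap C Mo Mm n"
begin

text \<open>d n i is the face \<partial>_(n+1,i) : M_(n+1) \<rightarrow> M_n; indexing by the target avoids n - 1.\<close>

abbreviation "d n i \<equiv> face Mm (Suc n) i"
abbreviation "s n i \<equiv> degen Mm n i"
abbreviation "t n \<equiv> tmap Mm n"
abbreviation "pf n i \<equiv> pfac C Mo Mm n i"
abbreviation "pp n k \<equiv> pprod C Mo Mm n k"
abbreviation "P n \<equiv> pmap C Mo Mm n"
abbreviation "one n \<equiv> idt (Mo n)"

lemma Mo_ob[simp]: "Mo n \<in> ob" using duplicial unfolding duplicial_def by blast

lemma Mm_hom: "lam_plus m n f \<Longrightarrow> Mm m n f \<in> hom C (Mo n) (Mo m)"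
  using duplicial unfolding duplicial_def by blast

lemma Mm_ty: "lam_plus m n f \<Longrightarrow> ar (Mm m n f)" "lam_plus m n f \<Longrightarrow> dm (Mm m n f) = Mo n"
  "lam_plus m n f \<Longrightarrow> cd (Mm m n f) = Mo m"
  using Mm_hom by (auto simp: hom_iff)

lemma Mm_id: "Mm n n id = one n" using duplicial unfolding duplicial_def by blast

lemma Mm_comp: "lam_plus l m f \<Longrightarrow> lam_plus m n g \<Longrightarrow> Mm l n (g \<circ> f) = cmp (Mm l m f) (Mm m n g)"
  using duplicial unfolding duplicial_def by blast

lemma d_ty[simp]: "ar (d n i)" "dm (d n i) = Mo (Suc n)" "cd (d n i) = Mo n"
  unfolding face_def using Mm_ty[OF lam_plus_eps_Suc] by auto

lemma s_ty[simp]: "ar (s n i)" "dm (s n i) = Mo n" "cd (s n i) = Mo (Suc n)"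
  unfolding degen_def using Mm_ty[OF lam_plus_eta] by auto

lemma t_ty[simp]: "ar (t n)" "dm (t n) = Mo n" "cd (t n) = Mo n"
  unfolding tmap_def using Mm_ty[OF lam_plus_tau] by auto

lemma iota_ty[simp]: "ar (iota n)" "dm (iota n) = N n" "cd (iota n) = Mo n"
  using splitting by (auto simp: hom_iff)

lemma r_ty[simp]: "ar (r n)" "dm (r n) = Mo n" "cd (r n) = N n"
  using splitting by (auto simp: hom_iff)

lemma N_ob[simp]: "N n \<in> ob" using splitting by auto

lemma r_iota: "cmp (r n) (iota n) = idt (N n)" using splitting by auto

lemma iota_r: "cmp (iota n) (r n) = P n" using splitting by auto

lemma Mm_comp_eq:
  assumes "lam_plus l m f" "lam_plus m n g" "lam_plus l m' f'" "lam_plus m' n g'" "g \<circ> f = g' \<circ> f'"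
  shows "cmp (Mm l m f) (Mm m n g) = cmp (Mm l m' f') (Mm m' n g')"
  using assms Mm_comp by metis

lemma d0_sg: "cmp (d n 0) (s n (Suc n)) = t n"
  unfolding face_def degen_def tmap_def diff_Suc_1 Suc_eq_plus1[symmetric]
  by (subst Mm_comp[symmetric]) (auto intro: lam_plus_intros simp: eta_top_eps_0)

lemma d_d_comp:
  "i < j \<Longrightarrow> j \<le> Suc (Suc n) \<Longrightarrow> cmp (d n i) (d (Suc n) j) = cmp (d n (j - 1)) (d (Suc n) i)"
  unfolding face_def diff_Suc_1
  by (rule Mm_comp_eq) (auto intro: lam_plus_intros simp: eps_eps_comp)

lemma d_s_below: "i < j \<Longrightarrow> j \<le> Suc (Suc n) \<Longrightarrow> \<not> (i = 0 \<and> j = Suc (Suc n)) \<Longrightarrow>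
  cmp (d (Suc n) i) (s (Suc n) j) = cmp (s n (j - 1)) (d n i)"
  unfolding face_def degen_def diff_Suc_1 Suc_eq_plus1[symmetric]
  by (rule Mm_comp_eq) (auto intro: lam_plus_intros simp: eta_eps_comp_below)

lemma d_s_id: "j \<le> Suc n \<Longrightarrow> i = j \<or> i = Suc j \<Longrightarrow> cmp (d n i) (s n j) = one n"
  unfolding face_def degen_def diff_Suc_1 Suc_eq_plus1[symmetric]
  by (subst Mm_comp[symmetric]) (auto intro: lam_plus_intros simp: eta_eps_comp_id Mm_id)

lemma d_s_above: "Suc j < i \<Longrightarrow> i \<le> Suc (Suc n) \<Longrightarrow>
  cmp (d (Suc n) i) (s (Suc n) j) = cmp (s n j) (d n (i - 1))"
  unfolding face_def degen_def diff_Suc_1 Suc_eq_plus1[symmetric]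
  by (rule Mm_comp_eq) (auto intro: lam_plus_intros simp: eta_eps_comp_above)

lemma s_s_comp:
  "i \<le> j \<Longrightarrow> j \<le> Suc n \<Longrightarrow> cmp (s (Suc n) i) (s n j) = cmp (s (Suc n) (Suc j)) (s n i)"
  unfolding degen_def Suc_eq_plus1[symmetric]
  by (rule Mm_comp_eq) (auto intro: lam_plus_intros simp: eta_eta_comp)

definition T :: "nat \<Rightarrow> 'm" where
  "T n = mpow C (Mo n) (t n) (Suc n)"

lemma T_ty[simp]: "ar (T n)" "dm (T n) = Mo n" "cd (T n) = Mo n"
  by (simp_all add: T_def)

lemma t_power_eq_shift: "mpow C (Mo n) (t n) k = Mm n n (\<lambda>x. x + int k)"
proof (induction k)
  case 0
  have "(\<lambda>x::int. x + int 0) = id" by auto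
  then show ?case using Mm_id by simp
next
  case (Suc k)
  have "mpow C (Mo n) (t n) (Suc k) = cmp (t n) (Mm n n (\<lambda>x. x + int k))" using Suc by simp
  also have "\<dots> = Mm n n ((\<lambda>x. x + int k) \<circ> tau n)"
    unfolding tmap_def using Mm_comp[OF lam_plus_tau lam_plus_shift] by simp
  finally show ?case unfolding shift_comp_tau .
qed

text \<open>T is the action of the translation by n + 1, which is central in \<Lambda>_\<infinity>.\<close>

lemma T_natural:
  assumes f: "lam_plus m n f"
  shows "cmp (Mm m n f) (T n) = cmp (T m) (Mm m n f)"
  unfolding T_def t_power_eq_shift
  by (rule Mm_comp_eq[OF f lam_plus_shift lam_plus_shift f])
    (rule lam_inf_commute_shift[OF lam_plus_imp_lam_inf[OF f]])

lemma T_d_commute: "cmp (d n i) (T (Suc n)) = cmp (T n) (d n i)"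
  unfolding face_def using T_natural[OF lam_plus_eps_Suc] by simp

lemma T_s_commute: "cmp (s n i) (T n) = cmp (T (Suc n)) (s n i)"
  unfolding degen_def using T_natural[OF lam_plus_eta] by simp

lemma T_s_whisker:
  "ar x \<Longrightarrow> cd x = Mo n \<Longrightarrow> cmp (T (Suc n)) (cmp (s n i) x) = cmp (s n i) (cmp (T n) x)"
  by (rule cmp_eq_whisker[OF T_s_commute[symmetric]]) simp_all

section \<open>The normalization idempotent\<close>

lemma pf_Suc: "pf (Suc m) k = msub C (one (Suc m)) (cmp (s m (k-1)) (d m k))"
  by (simp add: pfac_def)

lemma pf_ty[simp]:
  "ar (pf (Suc m) k)" "dm (pf (Suc m) k) = Mo (Suc m)" "cd (pf (Suc m) k) = Mo (Suc m)"
  by (simp_all add: pf_Suc)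

lemma pp_ty[simp]:
  "ar (pp (Suc m) k)" "dm (pp (Suc m) k) = Mo (Suc m)" "cd (pp (Suc m) k) = Mo (Suc m)"
  by (induction k) simp_all

lemma P_ty[simp]: "ar (P n)" "dm (P n) = Mo n" "cd (P n) = Mo n"
  unfolding pmap_def by (cases n; simp)+

lemma d_pfac_commute:
  assumes "1 \<le> k" "k < j" "j \<le> Suc m"
  shows "cmp (d m j) (pf (Suc m) k) = cmp (pf m k) (d m j)"
proof -
  obtain m' where m: "m = Suc m'" using assms by (cases m) auto
  have e1: "cmp (d m j) (s m (k-1)) = cmp (s m' (k-1)) (d m' (j-1))"
    unfolding m by (rule d_s_above) (use assms m in auto)
  have e2: "cmp (d m' (j-1)) (d m k) = cmp (d m' k) (d m j)"
    unfolding m by (rule d_d_comp[symmetric]) (use assms m in auto)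
  have "cmp (d m j) (pf (Suc m) k) = msub C (d m j) (cmp (d m j) (cmp (s m (k-1)) (d m k)))"
    by (simp add: pf_Suc cat_simps)
  also have "\<dots> = msub C (d m j) (cmp (s m' (k-1)) (cmp (d m' (j-1)) (d m k)))"
    using cmp_eq_whisker[OF e1, of "d m k"] m by simp
  also have "\<dots> = msub C (d m j) (cmp (s m' (k-1)) (cmp (d m' k) (d m j)))"
    unfolding e2 ..
  also have "\<dots> = cmp (pf m k) (d m j)"
    unfolding m pf_Suc by (simp add: cat_simps)
  finally show ?thesis .
qed

lemma d_pprod_commute: "k < j \<Longrightarrow> j \<le> Suc m \<Longrightarrow> cmp (d m j) (pp (Suc m) k) = cmp (pp m k) (d m j)"
proof (induction k)
  case 0 then show ?case by (simp add: cat_simps)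
next
  case (Suc k)
  obtain m' where m: "m = Suc m'" using Suc by (cases m) auto
  have "cmp (d m j) (pp (Suc m) (Suc k)) = cmp (cmp (d m j) (pp (Suc m) k)) (pf (Suc m) (Suc k))"
    by (simp add: cat_simps)
  also have "\<dots> = cmp (pp m k) (cmp (d m j) (pf (Suc m) (Suc k)))"
    using Suc m by (simp add: cat_simps)
  also have "\<dots> = cmp (pp m k) (cmp (pf m (Suc k)) (d m j))"
    using d_pfac_commute[of "Suc k" j m] Suc by simp
  also have "\<dots> = cmp (pp m (Suc k)) (d m j)" using m by (simp add: cat_simps)
  finally show ?case .
qed

lemma d_pfac_zero:
  assumes "1 \<le> j" "j \<le> Suc m"
  shows "cmp (d m j) (pf (Suc m) j) = zer (Mo (Suc m)) (Mo m)"
proof -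
  have "cmp (d m j) (pf (Suc m) j) = msub C (d m j) (cmp (cmp (d m j) (s m (j - 1))) (d m j))"
    by (simp add: pf_Suc cat_simps)
  also have "cmp (d m j) (s m (j - 1)) = one m" using assms by (intro d_s_id) auto
  finally show ?thesis by (simp add: cat_simps sub_self)
qed

lemma d_pprod_zero:
  "1 \<le> j \<Longrightarrow> j \<le> k \<Longrightarrow> k \<le> Suc m \<Longrightarrow> cmp (d m j) (pp (Suc m) k) = zer (Mo (Suc m)) (Mo m)"
proof (induction k)
  case (Suc k)
  have "cmp (d m j) (pp (Suc m) (Suc k)) = cmp (cmp (d m j) (pp (Suc m) k)) (pf (Suc m) (Suc k))"
    by (simp add: cat_simps)
  also have "\<dots> = zer (Mo (Suc m)) (Mo m)"
  proof (cases "j = Suc k")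
    case True
    have "cmp (d m j) (pp (Suc m) k) = cmp (pp m k) (d m j)"
      using True Suc.prems by (intro d_pprod_commute) auto
    moreover have "ar (pp m k) \<and> dm (pp m k) = Mo m \<and> cd (pp m k) = Mo m"
      using True Suc.prems by (cases m) auto
    ultimately show ?thesis using True Suc.prems by (simp add: cat_simps d_pfac_zero)
  qed (use Suc in \<open>simp add: cat_simps\<close>)
  finally show ?case .
qed simp

lemma d_P_zero: "1 \<le> j \<Longrightarrow> j \<le> Suc m \<Longrightarrow> cmp (d m j) (P (Suc m)) = zer (Mo (Suc m)) (Mo m)"
  unfolding pmap_def by (rule d_pprod_zero) auto

lemma P_iota: "cmp (P n) (iota n) = iota n"
proof -
  have "cmp (P n) (iota n) = cmp (iota n) (cmp (r n) (iota n))"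
    by (simp add: iota_r[symmetric] cat_simps)
  then show ?thesis by (simp add: r_iota cat_simps)
qed

lemma r_P: "cmp (r n) (P n) = r n"
proof -
  have "cmp (r n) (P n) = cmp (cmp (r n) (iota n)) (r n)"
    by (simp add: iota_r[symmetric] cat_simps)
  then show ?thesis by (simp add: r_iota cat_simps)
qed

lemma d_iota_zero: "1 \<le> j \<Longrightarrow> j \<le> Suc m \<Longrightarrow> cmp (d m j) (iota (Suc m)) = zer (N (Suc m)) (Mo m)"
proof -
  assume a: "1 \<le> j" "j \<le> Suc m"
  have "cmp (d m j) (iota (Suc m)) = cmp (cmp (d m j) (P (Suc m))) (iota (Suc m))"
    by (simp add: cat_simps P_iota)
  then show ?thesis using d_P_zero[OF a] by (simp add: cat_simps)
qed

lemma P_fixes_if_faces_vanish: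
  assumes y: "ar y" "cd y = Mo (Suc m)"
    and z: "\<And>j. 1 \<le> j \<Longrightarrow> j \<le> Suc m \<Longrightarrow> cmp (d m j) y = zer (dm y) (Mo m)"
  shows "cmp (P (Suc m)) y = y"
proof -
  have pprod_fixes: "k \<le> Suc m \<Longrightarrow> cmp (pp (Suc m) k) y = y" for k
  proof (induction k)
    case 0 then show ?case using y by (simp add: cat_simps)
  next
    case (Suc k)
    have "cmp (pp (Suc m) (Suc k)) y = cmp (pp (Suc m) k) (cmp (pf (Suc m) (Suc k)) y)"
      using y by (simp add: cat_simps)
    also have "cmp (pf (Suc m) (Suc k)) y = y"
      using y z[of "Suc k"] Suc by (simp add: pf_Suc cat_simps sub_zer)
    finally show ?case using Suc by simp
  qed
  show ?thesis unfolding pmap_def by (rule pprod_fixes) simp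
qed

lemma iota_r_fixes:
  assumes y: "ar y" "cd y = Mo n"
    and z: "\<And>j m. n = Suc m \<Longrightarrow> 1 \<le> j \<Longrightarrow> j \<le> n \<Longrightarrow> cmp (d m j) y = zer (dm y) (Mo m)"
  shows "cmp (iota n) (cmp (r n) y) = y"
proof -
  have "cmp (iota n) (cmp (r n) y) = cmp (P n) y" using y by (simp add: iota_r[symmetric] cat_simps)
  also have "\<dots> = y"
  proof (cases n)
    case 0 then show ?thesis using y by (simp add: pmap_def cat_simps)
  next
    case (Suc m) then show ?thesis using P_fixes_if_faces_vanish[of y m] y z by simp
  qed
  finally show ?thesis .
qed

lemma pfac_s_commute:
  assumes "j < k" "k \<le> m"
  shows "cmp (pf (Suc m) (Suc k)) (s m j) = cmp (s m j) (pf m k)"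
proof -
  obtain m' where m: "m = Suc m'" using assms by (cases m) auto
  have e1: "cmp (d m (Suc k)) (s m j) = cmp (s m' j) (d m' k)"
    unfolding m using d_s_above[of j "Suc k" m'] assms m by simp
  have e2: "cmp (s m k) (s m' j) = cmp (s m j) (s m' (k-1))"
    unfolding m using s_s_comp[of j "k-1" m'] assms m by simp
  have "cmp (pf (Suc m) (Suc k)) (s m j) = msub C (s m j) (cmp (s m k) (cmp (d m (Suc k)) (s m j)))"
    by (simp add: pf_Suc cat_simps)
  also have "\<dots> = msub C (s m j) (cmp (s m j) (cmp (s m' (k-1)) (d m' k)))"
    unfolding e1 using cmp_eq_whisker[OF e2, of "d m' k"] m by simp
  also have "\<dots> = cmp (s m j) (pf m k)" unfolding m pf_Suc by (simp add: cat_simps)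
  finally show ?thesis .
qed

lemma pfac_s_zero:
  assumes "j \<le> m"
  shows "cmp (pf (Suc m) (Suc j)) (s m j) = zer (Mo m) (Mo (Suc m))"
proof -
  have "cmp (pf (Suc m) (Suc j)) (s m j) = msub C (s m j) (cmp (s m j) (cmp (d m (Suc j)) (s m j)))"
    by (simp add: pf_Suc cat_simps)
  also have "cmp (d m (Suc j)) (s m j) = one m" using assms by (intro d_s_id) auto
  finally show ?thesis by (simp add: cat_simps sub_self)
qed

lemma pprod_s_zero:
  "j < k \<Longrightarrow> k \<le> Suc m \<Longrightarrow> cmp (pp (Suc m) k) (s m j) = zer (Mo m) (Mo (Suc m))"
proof (induction k)
  case (Suc k)
  have "cmp (pp (Suc m) (Suc k)) (s m j) = cmp (pp (Suc m) k) (cmp (pf (Suc m) (Suc k)) (s m j))"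
    by (simp add: cat_simps)
  also have "\<dots> = zer (Mo m) (Mo (Suc m))"
  proof (cases "j = k")
    case False
    then have "j < k" using Suc.prems by simp
    then obtain m' where m: "m = Suc m'" using Suc.prems by (cases m) auto
    have "cmp (pp (Suc m) k) (cmp (pf (Suc m) (Suc k)) (s m j))
        = cmp (cmp (pp (Suc m) k) (s m j)) (pf m k)"
      using \<open>j < k\<close> Suc.prems by (simp add: pfac_s_commute m cat_simps)
    then show ?thesis using Suc.IH \<open>j < k\<close> Suc.prems m by (simp add: zer_cmp)
  qed (use Suc.prems in \<open>simp add: pfac_s_zero cat_simps\<close>)
  finally show ?case .
qed simp

lemma P_s_zero: "j \<le> m \<Longrightarrow> cmp (P (Suc m)) (s m j) = zer (Mo m) (Mo (Suc m))"
  unfolding pmap_def by (rule pprod_s_zero) auto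

lemma r_s_zero: "j \<le> m \<Longrightarrow> cmp (r (Suc m)) (s m j) = zer (Mo m) (N (Suc m))"
proof -
  assume a: "j \<le> m"
  have "cmp (r (Suc m)) (s m j) = cmp (cmp (r (Suc m)) (P (Suc m))) (s m j)"
    by (simp only: r_P)
  also have "\<dots> = cmp (r (Suc m)) (cmp (P (Suc m)) (s m j))" by (simp add: cat_simps)
  finally show ?thesis using P_s_zero[OF a] by (simp add: cmp_zer)
qed

lemma cmp_P_if_degeneracies_vanish:
  assumes F: "ar F" "dm F = Mo (Suc m)" and z: "\<And>j. j \<le> m \<Longrightarrow> cmp F (s m j) = zer (Mo m) (cd F)"
  shows "cmp F (P (Suc m)) = F"
proof -
  have pprod_absorbed: "k \<le> Suc m \<Longrightarrow> cmp F (pp (Suc m) k) = F" for k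
  proof (induction k)
    case 0 then show ?case using F by (simp add: cat_simps)
  next
    case (Suc k)
    have "cmp F (pp (Suc m) (Suc k)) = cmp (cmp F (pp (Suc m) k)) (pf (Suc m) (Suc k))"
      using F by (simp add: cat_simps)
    also have "\<dots> = cmp F (pf (Suc m) (Suc k))" using Suc by simp
    also have "\<dots> = msub C F (cmp (cmp F (s m k)) (d m (Suc k)))"
      using F by (simp add: pf_Suc cat_simps)
    also have "\<dots> = F" using z[of k] Suc F by (simp add: cat_simps sub_zer)
    finally show ?case .
  qed
  show ?thesis unfolding pmap_def by (rule pprod_absorbed) simp
qed

section \<open>The Karoubi operator\<close>

abbreviation "sg m \<equiv> s m (Suc m)"

lemma d0_sg_whisker: "ar x \<Longrightarrow> cd x = Mo n \<Longrightarrow> cmp (d n 0) (cmp (sg n) x) = cmp (t n) x"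
  by (simp add: d0_sg[symmetric] cat_simps)

lemma d_top_sg: "cmp (d m (Suc m)) (sg m) = one m"
  by (rule d_s_id) auto

lemma d_sg_commute: "1 \<le> i \<Longrightarrow> i \<le> Suc m \<Longrightarrow> cmp (d (Suc m) i) (sg (Suc m)) = cmp (sg m) (d m i)"
  using d_s_below[of i "Suc (Suc m)" m] by simp

lemma sg_sg: "cmp (sg (Suc m)) (sg m) = cmp (s (Suc m) (Suc m)) (sg m)"
  using s_s_comp[of "Suc m" "Suc m" m] by simp

lemma d_t_commute:
  assumes "i \<le> m"
  shows "cmp (d m i) (t (Suc m)) = cmp (t m) (d m (Suc i))"
proof -
  have "cmp (d m i) (t (Suc m)) = cmp (cmp (d m i) (d (Suc m) 0)) (sg (Suc m))"
    by (simp add: d0_sg[symmetric] cat_simps)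
  also have "cmp (d m i) (d (Suc m) 0) = cmp (d m 0) (d (Suc m) (Suc i))"
    using d_d_comp[of 0 "Suc i" m] assms by simp
  also have "cmp (cmp (d m 0) (d (Suc m) (Suc i))) (sg (Suc m))
      = cmp (d m 0) (cmp (sg m) (d m (Suc i)))"
    using d_sg_commute[of "Suc i" m] assms by (simp add: cat_simps)
  finally show ?thesis by (simp add: d0_sg_whisker)
qed

lemma d_top_t: "cmp (d m (Suc m)) (t (Suc m)) = d m 0"
proof -
  have "cmp (d m (Suc m)) (t (Suc m)) = cmp (cmp (d m (Suc m)) (d (Suc m) 0)) (sg (Suc m))"
    by (simp add: d0_sg[symmetric] cat_simps)
  also have "cmp (d m (Suc m)) (d (Suc m) 0) = cmp (d m 0) (d (Suc m) (Suc (Suc m)))"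
    using d_d_comp[of 0 "Suc (Suc m)" m] by simp
  finally show ?thesis by (simp add: cat_simps d_top_sg)
qed

lemma t_s_commute:
  assumes "1 \<le> j" "j \<le> Suc m"
  shows "cmp (t (Suc m)) (s m j) = cmp (s m (j - 1)) (t m)"
proof -
  have "cmp (t (Suc m)) (s m j) = cmp (d (Suc m) 0) (cmp (sg (Suc m)) (s m j))"
    by (simp add: d0_sg[symmetric] cat_simps)
  also have "cmp (sg (Suc m)) (s m j) = cmp (s (Suc m) j) (sg m)"
    using s_s_comp[of j "Suc m" m] assms by simp
  also have "cmp (d (Suc m) 0) (cmp (s (Suc m) j) (sg m)) = cmp (s m (j - 1)) (cmp (d m 0) (sg m))"
    using d_s_below[of 0 j m] assms by (simp add: cat_simps[symmetric])
  finally show ?thesis by (simp add: d0_sg)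
qed

lemma t_sg: "cmp (t (Suc m)) (sg m) = cmp (s m m) (t m)"
  using t_s_commute[of "Suc m" m] by simp

lemma t_s_0: "cmp (t (Suc m)) (s m 0) = sg m"
proof -
  have "cmp (t (Suc m)) (s m 0) = cmp (d (Suc m) 0) (cmp (sg (Suc m)) (s m 0))"
    by (simp add: d0_sg[symmetric] cat_simps)
  also have "cmp (sg (Suc m)) (s m 0) = cmp (s (Suc m) 0) (sg m)"
    using s_s_comp[of 0 "Suc m" m] by simp
  also have "cmp (d (Suc m) 0) (cmp (s (Suc m) 0) (sg m))
      = cmp (cmp (d (Suc m) 0) (s (Suc m) 0)) (sg m)"
    by (simp add: cat_simps)
  finally show ?thesis by (simp add: d_s_id cat_simps)
qed

definition K :: "nat \<Rightarrow> 'm" where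
  "K n = (if n = 0 then t 0 else msub C (t n) (cmp (s (n - 1) n) (d (n - 1) 0)))"

lemma K_0: "K 0 = t 0"
  by (simp add: K_def)

lemma K_Suc: "K (Suc m) = msub C (t (Suc m)) (cmp (sg m) (d m 0))"
  by (simp add: K_def)

lemma K_ty[simp]: "ar (K n)" "dm (K n) = Mo n" "cd (K n) = Mo n"
  by (cases n; simp add: K_0 K_Suc)+

lemma kappa_eq: "kappa C Mm n = msgn C n (K n)"
  by (cases n) (simp_all add: kappa_def K_0 K_Suc d0_sg)

lemma d_K_commute:
  assumes "1 \<le> i" "i \<le> m"
  shows "cmp (d m i) (K (Suc m)) = cmp (K m) (d m (Suc i))"
proof -
  obtain m' where m: "m = Suc m'" using assms by (cases m) auto
  have "cmp (d m i) (cmp (sg m) (d m 0)) = cmp (cmp (sg m') (d m' i)) (d m 0)"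
    using d_sg_commute[of i m'] assms m by (simp add: cat_simps[symmetric])
  also have "\<dots> = cmp (sg m') (cmp (d m' 0) (d m (Suc i)))"
    using d_d_comp[of 0 "Suc i" m'] assms m by (simp add: cat_simps)
  finally show ?thesis
    unfolding K_Suc using d_t_commute[of i m] assms by (simp add: m K_Suc cat_simps)
qed

lemma d_top_K_zero: "cmp (d m (Suc m)) (K (Suc m)) = zer (Mo (Suc m)) (Mo m)"
proof -
  have "cmp (d m (Suc m)) (cmp (sg m) (d m 0)) = d m 0"
    by (simp add: cat_simps[symmetric] d_top_sg id_cmp)
  then show ?thesis unfolding K_Suc by (simp add: cat_simps d_top_t sub_self)
qed

lemma d0_K: "cmp (d m 0) (K (Suc m)) = cmp (t m) (msub C (d m 1) (d m 0))"
  unfolding K_Suc using d_t_commute[of 0 m] by (simp add: cat_simps d0_sg_whisker)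

lemma K_d_diff: "cmp (K m) (msub C (d m 1) (d m 0)) = cmp (t m) (msub C (d m 1) (d m 0))"
proof (cases m)
  case (Suc m')
  have "cmp (d m' 0) (d m 1) = cmp (d m' 0) (d m 0)" using d_d_comp[of 0 1 m'] Suc by simp
  then have "cmp (cmp (sg m') (d m' 0)) (msub C (d m 1) (d m 0)) = zer (Mo (Suc m)) (Mo m)"
    using Suc by (simp add: cat_simps sub_self)
  then show ?thesis unfolding Suc K_Suc using Suc by (simp add: sub_cmp_distrib sub_zer)
qed (simp add: K_0)

lemma K_s_0_zero: "cmp (K (Suc m)) (s m 0) = zer (Mo m) (Mo (Suc m))"
proof -
  have "cmp (cmp (sg m) (d m 0)) (s m 0) = cmp (sg m) (cmp (d m 0) (s m 0))"
    by (simp add: cat_simps)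
  then have "cmp (cmp (sg m) (d m 0)) (s m 0) = sg m"
    by (simp add: d_s_id cat_simps)
  then show ?thesis unfolding K_Suc by (simp add: sub_cmp_distrib t_s_0 sub_self)
qed

lemma K_s_commute:
  assumes "1 \<le> j" "j \<le> m"
  shows "cmp (K (Suc m)) (s m j) = cmp (s m (j - 1)) (K m)"
proof -
  obtain m' where m: "m = Suc m'" using assms by (cases m) auto
  have "cmp (cmp (sg m) (d m 0)) (s m j) = cmp (cmp (sg m) (s m' (j - 1))) (d m' 0)"
    using d_s_below[of 0 j m'] assms m by (simp add: cat_simps)
  also have "cmp (sg m) (s m' (j - 1)) = cmp (s m (j - 1)) (sg m')"
    using s_s_comp[of "j - 1" "Suc m'" m'] assms m by simp
  finally show ?thesis
    unfolding K_Suc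
      using t_s_commute[of j m] assms m
      by (simp add: sub_cmp_distrib cmp_sub_distrib cmp_assoc K_Suc)
qed

section \<open>Restriction to the normalized part\<close>

abbreviation "eN n \<equiv> idt (N n)"

definition KN :: "nat \<Rightarrow> 'm" where "KN n = cmp (r n) (cmp (K n) (iota n))"
definition bN :: "nat \<Rightarrow> 'm" where "bN m = cmp (r m) (cmp (d m 0) (iota (Suc m)))"
definition sN :: "nat \<Rightarrow> 'm" where "sN m = cmp (r (Suc m)) (cmp (sg m) (iota m))"
definition tN :: "nat \<Rightarrow> 'm" where "tN n = cmp (r n) (cmp (t n) (iota n))"

lemma KN_ty[simp]: "ar (KN n)" "dm (KN n) = N n" "cd (KN n) = N n"
  by (simp_all add: KN_def)

lemma bN_ty[simp]: "ar (bN n)" "dm (bN n) = N (Suc n)" "cd (bN n) = N n"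
  by (simp_all add: bN_def)

lemma sN_ty[simp]: "ar (sN n)" "dm (sN n) = N n" "cd (sN n) = N (Suc n)"
  by (simp_all add: sN_def)

lemma tN_ty[simp]: "ar (tN n)" "dm (tN n) = N n" "cd (tN n) = N n"
  by (simp_all add: tN_def)

lemma K_iota: "cmp (K n) (iota n) = cmp (iota n) (KN n)"
proof -
  have "cmp (iota n) (cmp (r n) (cmp (K n) (iota n))) = cmp (K n) (iota n)"
  proof (rule iota_r_fixes)
    fix j m assume n: "n = Suc m" and j: "1 \<le> j" "j \<le> n"
    show "cmp (d m j) (cmp (K n) (iota n)) = zer (dm (cmp (K n) (iota n))) (Mo m)"
    proof (cases "j = Suc m")
      case True
      have "cmp (d m j) (cmp (K n) (iota n)) = cmp (cmp (d m (Suc m)) (K (Suc m))) (iota n)"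
        using True n by (simp add: cat_simps)
      then show ?thesis using n by (simp add: d_top_K_zero zer_cmp)
    next
      case False
      then have "j \<le> m" using j n by simp
      have "cmp (d m j) (cmp (K n) (iota n)) = cmp (cmp (d m j) (K (Suc m))) (iota n)"
        using n by (simp add: cat_simps)
      also have "\<dots> = cmp (K m) (cmp (d m (Suc j)) (iota (Suc m)))"
        using d_K_commute[of j m] j \<open>j \<le> m\<close> n by (simp add: cat_simps)
      finally show ?thesis using d_iota_zero[of "Suc j" m] \<open>j \<le> m\<close> n by (simp add: cmp_zer)
    qed
  qed simp_all
  then show ?thesis unfolding KN_def by simp
qed

lemma r_K: "cmp (r n) (K n) = cmp (KN n) (r n)"
proof -
  have r_K_P: "cmp (cmp (r n) (K n)) (P n) = cmp (r n) (K n)"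
  proof (cases n)
    case 0 then show ?thesis by (simp add: pmap_def cat_simps)
  next
    case (Suc m)
    show ?thesis unfolding Suc
    proof (rule cmp_P_if_degeneracies_vanish)
      fix j assume j: "j \<le> m"
      show "cmp (cmp (r (Suc m)) (K (Suc m))) (s m j)
          = zer (Mo m) (cd (cmp (r (Suc m)) (K (Suc m))))"
      proof (cases j)
        case 0 then show ?thesis by (simp add: cat_simps K_s_0_zero)
      next
        case (Suc j')
        have "cmp (cmp (r (Suc m)) (K (Suc m))) (s m j) = cmp (r (Suc m)) (cmp (s m (j-1)) (K m))"
          using K_s_commute[of j m] j Suc by (simp add: cat_simps)
        also have "\<dots> = cmp (cmp (r (Suc m)) (s m (j-1))) (K m)" by (simp add: cat_simps)
        finally show ?thesis using r_s_zero[of "j-1" m] j by (simp add: zer_cmp)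
      qed
    qed simp_all
  qed
  have "cmp (r n) (K n) = cmp (cmp (r n) (K n)) (cmp (iota n) (r n))"
    using r_K_P by (simp add: iota_r)
  also have "\<dots> = cmp (KN n) (r n)" by (simp add: cat_simps KN_def)
  finally show ?thesis .
qed

lemma d0_iota: "cmp (d m 0) (iota (Suc m)) = cmp (iota m) (bN m)"
proof -
  have "cmp (iota m) (cmp (r m) (cmp (d m 0) (iota (Suc m)))) = cmp (d m 0) (iota (Suc m))"
  proof (rule iota_r_fixes)
    fix j m' assume m: "m = Suc m'" and j: "1 \<le> j" "j \<le> m"
    have e: "cmp (d m' j) (d m 0) = cmp (d m' 0) (d m (Suc j))"
      using d_d_comp[of 0 "Suc j" m'] m j by simp
    have "cmp (d m' j) (cmp (d m 0) (iota (Suc m)))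
        = cmp (d m' 0) (cmp (d m (Suc j)) (iota (Suc m)))"
      using cmp_eq_whisker[OF e, of "iota (Suc m)"] m by simp
    then show "cmp (d m' j) (cmp (d m 0) (iota (Suc m)))
        = zer (dm (cmp (d m 0) (iota (Suc m)))) (Mo m')"
      using d_iota_zero[of "Suc j" m] j m by (simp add: cmp_zer)
  qed simp_all
  then show ?thesis unfolding bN_def by simp
qed

lemma bN_KN_anticommute: "cmp (bN m) (KN (Suc m)) = ngt (cmp (KN m) (bN m))"
proof -
  have "cmp (bN m) (KN (Suc m)) = cmp (r m) (cmp (d m 0) (cmp (iota (Suc m)) (KN (Suc m))))"
    by (simp add: bN_def cat_simps)
  also have "\<dots> = cmp (r m) (cmp (cmp (d m 0) (K (Suc m))) (iota (Suc m)))"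
    by (simp add: K_iota[symmetric] cat_simps)
  also have "\<dots> = cmp (r m) (cmp (cmp (K m) (msub C (d m 1) (d m 0))) (iota (Suc m)))"
    by (simp only: d0_K K_d_diff)
  also have "\<dots>
      = cmp (r m) (cmp (K m) (msub C (cmp (d m 1) (iota (Suc m))) (cmp (d m 0) (iota (Suc m)))))"
    by (simp add: cat_simps)
  also have "\<dots> = ngt (cmp (cmp (r m) (K m)) (cmp (d m 0) (iota (Suc m))))"
    using d_iota_zero[of 1 m] by (simp add: zer_sub cat_simps)
  also have "\<dots> = ngt (cmp (KN m) (bN m))" by (simp add: r_K bN_def cat_simps)
  finally show ?thesis .
qed

lemma r_sg_K_iota:
  "cmp (r (Suc m)) (cmp (sg m) (cmp (K m) (iota m)))
      = cmp (r (Suc m)) (cmp (sg m) (cmp (t m) (iota m)))"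
proof (cases m)
  case 0 then show ?thesis by (simp add: K_0)
next
  case (Suc m')
  have e: "cmp (sg m) (cmp (sg m') (cmp (d m' 0) (iota m)))
      = cmp (s m m) (cmp (sg m') (cmp (d m' 0) (iota m)))"
    using cmp_eq_whisker[OF sg_sg[of m'], of "cmp (d m' 0) (iota m)"] Suc by simp
  have z: "cmp (r (Suc m)) (cmp (sg m) (cmp (sg m') (cmp (d m' 0) (iota m))))
      = zer (N m) (N (Suc m))"
  proof -
    have "cmp (r (Suc m)) (cmp (sg m) (cmp (sg m') (cmp (d m' 0) (iota m))))
       = cmp (cmp (r (Suc m)) (s m m)) (cmp (sg m') (cmp (d m' 0) (iota m)))"
      unfolding e using Suc by (simp add: cat_simps)
    then show ?thesis using r_s_zero[of m m] Suc by (simp add: zer_cmp)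
  qed
  have "cmp (r (Suc m)) (cmp (sg m) (cmp (K m) (iota m))) =
     msub C (cmp (r (Suc m)) (cmp (sg m) (cmp (t m) (iota m))))
            (cmp (r (Suc m)) (cmp (sg m) (cmp (sg m') (cmp (d m' 0) (iota m)))))"
    unfolding Suc K_Suc using Suc by (simp add: cat_simps)
  then show ?thesis using z by (simp add: sub_zer)
qed

lemma sN_KN_anticommute: "cmp (sN m) (KN m) = ngt (cmp (KN (Suc m)) (sN m))"
proof -
  have l: "cmp (sN m) (KN m) = cmp (r (Suc m)) (cmp (sg m) (cmp (t m) (iota m)))"
    unfolding sN_def using r_sg_K_iota by (simp add: cat_simps K_iota)
  have "cmp (KN (Suc m)) (sN m) = cmp (cmp (r (Suc m)) (K (Suc m))) (cmp (sg m) (iota m))"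
    by (simp add: sN_def r_K cat_simps)
  also have "\<dots> = cmp (r (Suc m)) (cmp (cmp (K (Suc m)) (sg m)) (iota m))" by (simp add: cat_simps)
  also have "cmp (K (Suc m)) (sg m) = msub C (cmp (s m m) (t m)) (cmp (sg m) (t m))"
  proof -
    have "cmp (K (Suc m)) (sg m)
        = msub C (cmp (t (Suc m)) (sg m)) (cmp (sg m) (cmp (d m 0) (sg m)))"
      by (simp add: K_Suc cat_simps)
    then show ?thesis by (simp add: t_sg d0_sg)
  qed
  also have "cmp (r (Suc m)) (cmp (msub C (cmp (s m m) (t m)) (cmp (sg m) (t m))) (iota m))
      = msub C (cmp (cmp (r (Suc m)) (s m m)) (cmp (t m) (iota m)))
          (cmp (r (Suc m)) (cmp (sg m) (cmp (t m) (iota m))))"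
    by (simp add: cat_simps)
  also have "\<dots> = ngt (cmp (r (Suc m)) (cmp (sg m) (cmp (t m) (iota m))))"
    using r_s_zero[of m m] by (simp add: zer_cmp zer_sub)
  finally show ?thesis using l by simp
qed

lemma bN_bN_zero: "cmp (bN m) (bN (Suc m)) = zer (N (Suc (Suc m))) (N m)"
proof -
  have e: "cmp (d m 0) (d (Suc m) 0) = cmp (d m 0) (d (Suc m) 1)" using d_d_comp[of 0 1 m] by simp
  have "cmp (bN m) (bN (Suc m)) = cmp (r m) (cmp (d m 0) (cmp (iota (Suc m)) (bN (Suc m))))"
    by (simp add: bN_def cat_simps)
  also have "\<dots> = cmp (r m) (cmp (cmp (d m 0) (d (Suc m) 0)) (iota (Suc (Suc m))))"
    by (simp add: d0_iota[symmetric] cat_simps)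
  also have "\<dots> = cmp (r m) (cmp (d m 0) (cmp (d (Suc m) 1) (iota (Suc (Suc m)))))"
    unfolding e by (simp add: cat_simps)
  finally show ?thesis using d_iota_zero[of 1 "Suc m"] by (simp add: cmp_zer)
qed

lemma sN_sN_zero: "cmp (sN (Suc m)) (sN m) = zer (N m) (N (Suc (Suc m)))"
proof -
  have P_absorbed: "cmp (cmp (r (Suc (Suc m))) (sg (Suc m))) (P (Suc m))
      = cmp (r (Suc (Suc m))) (sg (Suc m))"
  proof (rule cmp_P_if_degeneracies_vanish)
    fix j assume j: "j \<le> m"
    have e: "cmp (sg (Suc m)) (s m j) = cmp (s (Suc m) j) (sg m)"
      using s_s_comp[of j "Suc m" m] j by simp
    have "cmp (cmp (r (Suc (Suc m))) (sg (Suc m))) (s m j)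
        = cmp (cmp (r (Suc (Suc m))) (s (Suc m) j)) (sg m)"
      using e by (simp add: cat_simps)
    then show "cmp (cmp (r (Suc (Suc m))) (sg (Suc m))) (s m j)
        = zer (Mo m) (cd (cmp (r (Suc (Suc m))) (sg (Suc m))))"
      using r_s_zero[of j "Suc m"] j by (simp add: zer_cmp)
  qed simp_all
  have "cmp (sN (Suc m)) (sN m)
      = cmp (cmp (cmp (r (Suc (Suc m))) (sg (Suc m))) (P (Suc m))) (cmp (sg m) (iota m))"
    by (simp add: sN_def iota_r[symmetric] cat_simps)
  also have "\<dots> = cmp (r (Suc (Suc m))) (cmp (cmp (sg (Suc m)) (sg m)) (iota m))"
    unfolding P_absorbed by (simp add: cat_simps)
  also have "\<dots> = cmp (cmp (r (Suc (Suc m))) (s (Suc m) (Suc m))) (cmp (sg m) (iota m))"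
    unfolding sg_sg by (simp add: cat_simps)
  finally show ?thesis using r_s_zero[of "Suc m" "Suc m"] by (simp add: zer_cmp)
qed

lemma KN_Suc_eq: "KN (Suc m) = msub C (tN (Suc m)) (cmp (sN m) (bN m))"
proof -
  have "KN (Suc m)
      = msub C (tN (Suc m)) (cmp (r (Suc m)) (cmp (sg m) (cmp (d m 0) (iota (Suc m)))))"
    by (simp add: KN_def tN_def K_Suc cat_simps)
  then show ?thesis by (simp add: d0_iota sN_def cat_simps)
qed

lemma KN_0_eq: "KN 0 = tN 0" by (simp add: KN_def tN_def K_0)

lemma pfac_s_commute_below:
  assumes "1 \<le> i" "i < j" "j \<le> m"
  shows "cmp (pf (Suc m) i) (s m j) = cmp (s m j) (pf m i)"
proof -
  obtain m' where m: "m = Suc m'" using assms by (cases m) auto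
  have e1: "cmp (d m i) (s m j) = cmp (s m' (j-1)) (d m' i)"
    using d_s_below[of i j m'] assms m by simp
  have e2: "cmp (s m (i-1)) (s m' (j-1)) = cmp (s m j) (s m' (i-1))"
    using s_s_comp[of "i-1" "j-1" m'] assms m by simp
  have "cmp (pf (Suc m) i) (s m j) = msub C (s m j) (cmp (s m (i-1)) (cmp (d m i) (s m j)))"
    by (simp add: pf_Suc cat_simps)
  also have "\<dots> = msub C (s m j) (cmp (s m j) (cmp (s m' (i-1)) (d m' i)))"
    unfolding e1 using cmp_eq_whisker[OF e2, of "d m' i"] m by simp
  also have "\<dots> = cmp (s m j) (pf m i)" unfolding m pf_Suc by (simp add: cat_simps)
  finally show ?thesis .
qed

lemma pprod_s_commute_below: "k < j \<Longrightarrow> j \<le> m \<Longrightarrow> cmp (pp (Suc m) k) (s m j) = cmp (s m j) (pp m k)"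
proof (induction k)
  case 0 then show ?case by (simp add: cat_simps)
next
  case (Suc k)
  obtain m' where m: "m = Suc m'" using Suc by (cases m) auto
  have "cmp (pp (Suc m) (Suc k)) (s m j) = cmp (pp (Suc m) k) (cmp (pf (Suc m) (Suc k)) (s m j))"
    by (simp add: cat_simps)
  also have "\<dots> = cmp (pp (Suc m) k) (cmp (s m j) (pf m (Suc k)))"
    using pfac_s_commute_below[of "Suc k" j m] Suc by simp
  also have "\<dots> = cmp (cmp (pp (Suc m) k) (s m j)) (pf m (Suc k))" using m by (simp add: cat_simps)
  also have "\<dots> = cmp (s m j) (pp m (Suc k))" using Suc m by (simp add: cat_simps)
  finally show ?case .
qed

lemma r_d0_pprod_s: "k \<le> m \<Longrightarrow> cmp (r m) (cmp (d m 0) (cmp (pp (Suc m) k) (s m k))) = msgn C k (r m)"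
proof (induction k)
  case 0
  have "cmp (d m 0) (s m 0) = one m" by (rule d_s_id) auto
  then show ?case by (simp add: cat_simps)
next
  case (Suc k)
  obtain m' where m: "m = Suc m'" using Suc by (cases m) auto
  have e1: "cmp (pf (Suc m) (Suc k)) (s m (Suc k)) = msub C (s m (Suc k)) (s m k)"
  proof -
    have "cmp (d m (Suc k)) (s m (Suc k)) = one m" by (rule d_s_id) (use Suc in auto)
    then show ?thesis by (simp add: pf_Suc cat_simps)
  qed
  have z: "cmp (r m) (cmp (d m 0) (cmp (pp (Suc m) k) (s m (Suc k)))) = zer (Mo m) (N m)"
  proof -
    have e2: "cmp (d m 0) (s m (Suc k)) = cmp (s m' k) (d m' 0)"
      using d_s_below[of 0 "Suc k" m'] Suc m by simp
    have "cmp (r m) (cmp (d m 0) (cmp (pp (Suc m) k) (s m (Suc k))))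
        = cmp (r m) (cmp (d m 0) (cmp (s m (Suc k)) (pp m k)))"
      using pprod_s_commute_below[of k "Suc k" m] Suc by simp
    also have "\<dots> = cmp (cmp (r m) (s m' k)) (cmp (d m' 0) (pp m k))"
      using cmp_eq_whisker[OF e2, of "pp m k"] m by (simp add: cat_simps)
    finally show ?thesis using r_s_zero[of k m'] Suc m by (simp add: zer_cmp)
  qed
  have "cmp (r m) (cmp (d m 0) (cmp (pp (Suc m) (Suc k)) (s m (Suc k))))
      = cmp (r m) (cmp (d m 0) (cmp (pp (Suc m) k) (msub C (s m (Suc k)) (s m k))))"
    using e1[symmetric] by (simp add: cat_simps)
  also have "\<dots> = msub C (cmp (r m) (cmp (d m 0) (cmp (pp (Suc m) k) (s m (Suc k)))))
                         (cmp (r m) (cmp (d m 0) (cmp (pp (Suc m) k) (s m k))))"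
    by (simp add: cat_simps)
  also have "\<dots> = msub C (zer (Mo m) (N m)) (msgn C k (r m))" using z Suc by simp
  finally show ?case by (simp add: zer_sub msgn_Suc)
qed

lemma pprod_sg_iota: "k \<le> m \<Longrightarrow> cmp (pp (Suc m) k) (cmp (sg m) (iota m)) = cmp (sg m) (iota m)"
proof (induction k)
  case 0 then show ?case by (simp add: cat_simps)
next
  case (Suc k)
  obtain m' where m: "m = Suc m'" using Suc by (cases m) auto
  have e: "cmp (d m (Suc k)) (sg m) = cmp (sg m') (d m' (Suc k))"
    using d_sg_commute[of "Suc k" m'] Suc m by simp
  have z: "cmp (d m (Suc k)) (cmp (sg m) (iota m)) = zer (N m) (Mo m)"
  proof -
    have "cmp (d m (Suc k)) (cmp (sg m) (iota m)) = cmp (sg m') (cmp (d m' (Suc k)) (iota m))"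
      using cmp_eq_whisker[OF e, of "iota m"] m by simp
    then show ?thesis using d_iota_zero[of "Suc k" m'] Suc m by (simp add: cmp_zer)
  qed
  have "cmp (pf (Suc m) (Suc k)) (cmp (sg m) (iota m)) = cmp (sg m) (iota m)"
    using z by (simp add: pf_Suc cat_simps sub_zer)
  then show ?case using Suc by (simp add: cat_simps)
qed

lemma bN_sN_eq: "cmp (bN m) (sN m) = msub C (tN m) (msgn C m (eN m))"
proof -
  have e1: "cmp (pf (Suc m) (Suc m)) (cmp (sg m) (iota m))
      = msub C (cmp (sg m) (iota m)) (cmp (s m m) (iota m))"
  proof -
    have "cmp (pf (Suc m) (Suc m)) (cmp (sg m) (iota m))
       = msub C (cmp (sg m) (iota m)) (cmp (s m m) (cmp (cmp (d m (Suc m)) (sg m)) (iota m)))"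
      by (simp add: pf_Suc cat_simps)
    then show ?thesis by (simp add: d_top_sg cat_simps)
  qed
  have "cmp (bN m) (sN m) = cmp (r m) (cmp (d m 0) (cmp (P (Suc m)) (cmp (sg m) (iota m))))"
    by (simp add: bN_def sN_def iota_r[symmetric] cat_simps)
  also have "\<dots>
      = cmp (r m) (cmp (d m 0)
          (cmp (pp (Suc m) m) (cmp (pf (Suc m) (Suc m)) (cmp (sg m) (iota m)))))"
    by (simp add: pmap_def cat_simps)
  also have "\<dots> = msub C (cmp (r m) (cmp (d m 0) (cmp (pp (Suc m) m) (cmp (sg m) (iota m)))))
                         (cmp (cmp (r m) (cmp (d m 0) (cmp (pp (Suc m) m) (s m m)))) (iota m))"
    unfolding e1 by (simp add: cat_simps)
  also have "\<dots>
      = msub C (cmp (r m) (cmp (cmp (d m 0) (sg m)) (iota m))) (cmp (msgn C m (r m)) (iota m))"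
    using pprod_sg_iota[of m m] r_d0_pprod_s[of m m] by (simp add: cat_simps)
  also have "\<dots> = msub C (tN m) (msgn C m (eN m))" by (simp add: d0_sg tN_def msgn_cmp r_iota)
  finally show ?thesis .
qed

section \<open>The Dwyer--Kan operator\<close>

abbreviation "Kpow n j \<equiv> mpow C (Mo (Suc n)) (K (Suc n)) j"

lemma d_Kpow_sg_iota_zero:
  "1 \<le> i \<Longrightarrow> i + j \<le> n \<Longrightarrow> cmp (d n i) (cmp (Kpow n j) (cmp (sg n) (iota n))) = zer (N n) (Mo n)"
proof (induction j arbitrary: i)
  case 0
  obtain n' where n: "n = Suc n'" using 0 by (cases n) auto
  have e: "cmp (d n i) (sg n) = cmp (sg n') (d n' i)" using d_sg_commute[of i n'] 0 n by simp
  have "cmp (d n i) (cmp (sg n) (iota n)) = cmp (sg n') (cmp (d n' i) (iota n))"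
    using cmp_eq_whisker[OF e, of "iota n"] n by simp
  then show ?case using d_iota_zero[of i n'] 0 n by (simp add: id_cmp cmp_zer)
next
  case (Suc j)
  have "cmp (d n i) (cmp (Kpow n (Suc j)) (cmp (sg n) (iota n)))
      = cmp (cmp (d n i) (K (Suc n))) (cmp (Kpow n j) (cmp (sg n) (iota n)))"
    by (simp add: cat_simps)
  also have "\<dots> = cmp (K n) (cmp (d n (Suc i)) (cmp (Kpow n j) (cmp (sg n) (iota n))))"
    using d_K_commute[of i n] Suc.prems by (simp add: cat_simps)
  finally show ?case using Suc.IH[of "Suc i"] Suc.prems by (simp add: cmp_zer)
qed

lemma d0_Kpow_sg_iota:
  "j \<le> n \<Longrightarrow> cmp (d n 0) (cmp (Kpow n j) (cmp (sg n) (iota n)))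
      = msgn C j (cmp (mpow C (Mo n) (t n) (Suc j)) (iota n))"
proof (induction j)
  case 0 then show ?case by (simp add: cat_simps d0_sg[symmetric])
next
  case (Suc j)
  let ?Y = "cmp (Kpow n j) (cmp (sg n) (iota n))"
  have "cmp (d n 0) (cmp (Kpow n (Suc j)) (cmp (sg n) (iota n))) = cmp (cmp (d n 0) (K (Suc n))) ?Y"
    by (simp add: cat_simps)
  also have "\<dots> = cmp (t n) (msub C (cmp (d n 1) ?Y) (cmp (d n 0) ?Y))" by (simp add: d0_K cat_simps)
  also have "\<dots> = ngt (cmp (t n) (msgn C j (cmp (mpow C (Mo n) (t n) (Suc j)) (iota n))))"
    using d_Kpow_sg_iota_zero[of 1 j n] Suc by (simp add: zer_sub cmp_ngt)
  finally show ?case by (simp add: cat_simps msgn_Suc)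
qed

lemma r_d0_Kpow_sg_iota:
  "j \<le> n \<Longrightarrow> cmp (r n) (cmp (d n 0) (cmp (Kpow n j) (cmp (sg n) (iota n))))
      = msgn C j (cmp (mpow C (N n) (KN n) j) (tN n))"
proof (induction j)
  case 0 then show ?case by (simp add: cat_simps d0_sg_whisker tN_def)
next
  case (Suc j)
  let ?Y = "cmp (Kpow n j) (cmp (sg n) (iota n))"
  have "cmp (r n) (cmp (d n 0) (cmp (Kpow n (Suc j)) (cmp (sg n) (iota n))))
      = cmp (r n) (cmp (cmp (d n 0) (K (Suc n))) ?Y)"
    by (simp add: cat_simps)
  also have "\<dots> = cmp (r n) (cmp (cmp (K n) (msub C (d n 1) (d n 0))) ?Y)"
    by (simp only: d0_K K_d_diff)
  also have "\<dots> = cmp (cmp (r n) (K n)) (msub C (cmp (d n 1) ?Y) (cmp (d n 0) ?Y))"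
    by (simp add: cat_simps)
  also have "\<dots> = ngt (cmp (KN n) (cmp (r n) (cmp (d n 0) ?Y)))"
    using d_Kpow_sg_iota_zero[of 1 j n] Suc by (simp add: zer_sub cmp_ngt r_K cat_simps)
  finally show ?case using Suc by (simp add: cat_simps msgn_Suc)
qed

lemma piop_eq: "piop C Mo Mm n = msgn C n (cmp (d n 0) (cmp (Kpow n n) (sg n)))"
proof -
  have "mpow C (Mo (Suc n)) (kappa C Mm (Suc n)) n = Kpow n n"
    unfolding kappa_eq by (simp add: mpow_msgn msgn_even)
  then show ?thesis unfolding piop_def by simp
qed

lemma piop_iota: "cmp (piop C Mo Mm n) (iota n) = cmp (T n) (iota n)"
proof -
  have "cmp (piop C Mo Mm n) (iota n)
      = msgn C n (cmp (d n 0) (cmp (Kpow n n) (cmp (sg n) (iota n))))"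
    unfolding piop_eq by (simp add: cat_simps)
  then show ?thesis using d0_Kpow_sg_iota[of n n] by (simp add: T_def)
qed

lemma r_piop_iota: "cmp (r n) (cmp (piop C Mo Mm n) (iota n)) = cmp (mpow C (N n) (KN n) n) (tN n)"
proof -
  have "cmp (r n) (cmp (piop C Mo Mm n) (iota n))
      = msgn C n (cmp (r n) (cmp (d n 0) (cmp (Kpow n n) (cmp (sg n) (iota n)))))"
    unfolding piop_eq by (simp add: cat_simps)
  then show ?thesis using r_d0_Kpow_sg_iota[of n n] by simp
qed

definition TN :: "nat \<Rightarrow> 'm" where
  "TN n = cmp (r n) (cmp (T n) (iota n))"

lemma TN_ty[simp]: "ar (TN n)" "dm (TN n) = N n" "cd (TN n) = N n"
  by (simp_all add: TN_def)

lemma r_piop_iota_eq_TN: "cmp (r n) (cmp (piop C Mo Mm n) (iota n)) = TN n"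
  unfolding TN_def piop_iota ..

lemma TN_eq: "TN n = cmp (mpow C (N n) (KN n) n) (tN n)"
  unfolding r_piop_iota_eq_TN[symmetric] r_piop_iota ..

lemma T_pfac_commute: "cmp (T (Suc m)) (pf (Suc m) k) = cmp (pf (Suc m) k) (T (Suc m))"
proof -
  have "cmp (T (Suc m)) (cmp (s m (k - 1)) (d m k)) = cmp (s m (k - 1)) (cmp (d m k) (T (Suc m)))"
    by (simp add: T_s_whisker T_d_commute)
  then show ?thesis by (simp add: pf_Suc cat_simps)
qed

lemma T_pprod_commute: "cmp (T (Suc m)) (pp (Suc m) k) = cmp (pp (Suc m) k) (T (Suc m))"
proof (induction k)
  case (Suc k)
  have "cmp (T (Suc m)) (pp (Suc m) (Suc k))
      = cmp (cmp (T (Suc m)) (pp (Suc m) k)) (pf (Suc m) (Suc k))"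
    by (simp add: cat_simps)
  also have "\<dots> = cmp (pp (Suc m) k) (cmp (T (Suc m)) (pf (Suc m) (Suc k)))"
    unfolding Suc by (simp add: cat_simps)
  also have "\<dots> = cmp (pp (Suc m) (Suc k)) (T (Suc m))"
    unfolding T_pfac_commute by (simp add: cat_simps)
  finally show ?case .
qed (simp add: cat_simps)

lemma T_P_commute: "cmp (T n) (P n) = cmp (P n) (T n)"
  by (cases n) (simp_all only: pmap_def T_pprod_commute, simp add: cat_simps)

lemma splitting_hom: "iota n \<in> hom C (N n) (Mo n)" "r n \<in> hom C (Mo n) (N n)"
  by (simp_all add: hom_iff)

lemma T_iota: "cmp (T n) (iota n) = cmp (iota n) (TN n)"
  unfolding TN_def
  by (rule retract_commuting_iota[OF splitting_hom])
    (simp_all add: hom_iff r_iota iota_r T_P_commute)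

section \<open>Cyclicity\<close>

lemma T_eq_id_step:
  assumes IH: "\<And>m. n = Suc m \<Longrightarrow> T m = one m" and TN_id: "TN n = eN n"
  shows "T n = one n"
proof -
  let ?X = "msub C (T n) (one n)"
  have XP: "cmp ?X (P n) = ?X"
  proof (cases n)
    case 0 then show ?thesis by (simp add: pmap_def cat_simps)
  next
    case (Suc m)
    show ?thesis unfolding Suc
    proof (rule cmp_P_if_degeneracies_vanish)
      fix j assume "j \<le> m"
      have "cmp (msub C (T (Suc m)) (one (Suc m))) (s m j) = msub C (cmp (s m j) (T m)) (s m j)"
        by (simp add: cat_simps T_s_commute)
      then show "cmp (msub C (T (Suc m)) (one (Suc m))) (s m j)
          = zer (Mo m) (cd (msub C (T (Suc m)) (one (Suc m))))"
        using IH[OF Suc] by (simp add: cat_simps sub_self)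
    qed simp_all
  qed
  have "?X = cmp ?X (cmp (iota n) (r n))" using XP by (simp add: iota_r)
  also have "\<dots> = cmp (msub C (cmp (T n) (iota n)) (iota n)) (r n)" by (simp add: cat_simps)
  also have "\<dots> = zer (Mo n) (Mo n)" unfolding T_iota TN_id by (simp add: cat_simps sub_self)
  finally have Z: "?X = zer (Mo n) (Mo n)" .
  show ?thesis by (rule sub_eq_zero_imp_eq) (simp_all add: Z)
qed

lemma cyclic_iff: "cyclic C Mo Mm \<longleftrightarrow> (\<forall>n. cmp (r n) (cmp (piop C Mo Mm n) (iota n)) = eN n)"
proof
  assume "cyclic C Mo Mm"
  then have "T n = one n" for n unfolding cyclic_def T_def by simp
  then show "\<forall>n. cmp (r n) (cmp (piop C Mo Mm n) (iota n)) = eN n"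
    by (simp add: r_piop_iota_eq_TN TN_def cat_simps r_iota)
next
  assume TN_id: "\<forall>n. cmp (r n) (cmp (piop C Mo Mm n) (iota n)) = eN n"
  have "T n = one n" for n
  proof (induction n rule: less_induct)
    case (less n)
    show ?case
    proof (rule T_eq_id_step)
      show "T m = one m" if "n = Suc m" for m using less that by simp
      show "TN n = eN n" using TN_id r_piop_iota_eq_TN[of n] by simp
    qed
  qed
  then show "cyclic C Mo Mm" unfolding cyclic_def T_def by simp
qed

section \<open>Paracyclicity\<close>

lemma r_kappa_iota: "cmp (r n) (cmp (kappa C Mm n) (iota n)) = msgn C n (KN n)"
  unfolding kappa_eq KN_def by (simp add: cat_simps)

lemma invertible_T_iff_t: "invertible C (Mo n) (T n) \<longleftrightarrow> invertible C (Mo n) (t n)"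
proof
  assume "invertible C (Mo n) (T n)"
  then show "invertible C (Mo n) (t n)"
    using invertible_commuting_factor[of "t n" "Mo n" "mpow C (Mo n) (t n) n" "T n"]
    by (simp add: hom_iff T_def mpow_cmp_commute)
qed (unfold T_def, rule invertible_mpow)

lemma invertible_TN_if_T: "invertible C (Mo n) (T n) \<Longrightarrow> invertible C (N n) (TN n)"
  unfolding TN_def
  by (rule invertible_restriction[OF splitting_hom])
    (simp_all add: hom_iff r_iota iota_r T_P_commute)

lemma tN_eq: "tN n = pls (cmp (bN n) (sN n)) (msgn C n (eN n))"
  unfolding bN_sN_eq by (simp add: sub_pls_cancel)

lemma KN_tN_commute: "cmp (KN n) (tN n) = cmp (tN n) (KN n)"
proof -
  have KN_bN: "cmp (KN n) (bN n) = ngt (cmp (bN n) (KN (Suc n)))"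
    and KN_sN: "cmp (KN (Suc n)) (sN n) = ngt (cmp (sN n) (KN n))"
    by (simp_all add: bN_KN_anticommute sN_KN_anticommute)
  have "cmp (KN n) (cmp (bN n) (sN n)) = cmp (cmp (KN n) (bN n)) (sN n)"
    by (simp add: cat_simps)
  also have "\<dots> = ngt (cmp (bN n) (cmp (KN (Suc n)) (sN n)))"
    unfolding KN_bN by (simp add: cat_simps)
  also have "\<dots> = cmp (cmp (bN n) (sN n)) (KN n)"
    unfolding KN_sN by (simp add: cat_simps)
  finally show ?thesis
    unfolding tN_eq by (simp add: cmp_pls_distrib pls_cmp_distrib msgn_cmp cmp_msgn id_cmp cmp_id)
qed

lemma invertible_KN_if_TN:
  assumes "invertible C (N n) (TN n)"
  shows "invertible C (N n) (KN n)"
proof (cases n)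
  case 0
  then show ?thesis using assms by (simp add: TN_eq KN_0_eq id_cmp)
next
  case (Suc m)
  let ?V = "cmp (mpow C (N n) (KN n) m) (tN n)"
  have power: "mpow C (N n) (KN n) n = cmp (KN n) (mpow C (N n) (KN n) m)"
    using Suc by simp
  show ?thesis
  proof (rule invertible_commuting_factor[of _ _ ?V])
    show "cmp (KN n) ?V = TN n" unfolding TN_eq power by (simp add: cat_simps)
    have "cmp ?V (KN n) = cmp (cmp (mpow C (N n) (KN n) m) (KN n)) (tN n)"
      by (simp add: cat_simps KN_tN_commute)
    then show "cmp ?V (KN n) = TN n"
      unfolding TN_eq power by (simp add: mpow_cmp_commute cat_simps)
  qed (use assms in \<open>auto simp: hom_iff\<close>)
qed

lemma invertible_TN_if_KN_tN:
  "invertible C (N n) (KN n) \<Longrightarrow> invertible C (N n) (tN n) \<Longrightarrow> invertible C (N n) (TN n)"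
  unfolding TN_eq by (intro invertible_cmp invertible_mpow)

lemma bN_bN_zero_whisker:
  "ar x \<Longrightarrow> cd x = N (Suc (Suc m)) \<Longrightarrow> cmp (bN m) (cmp (bN (Suc m)) x) = zer (dm x) (N m)"
  by (simp add: cmp_assoc[symmetric] bN_bN_zero zer_cmp)

lemma sN_sN_zero_whisker:
  "ar x \<Longrightarrow> cd x = N m \<Longrightarrow> cmp (sN (Suc m)) (cmp (sN m) x) = zer (dm x) (N (Suc (Suc m)))"
  by (simp add: cmp_assoc[symmetric] sN_sN_zero zer_cmp)

text \<open>Write tN m = b s + (-1)^m and KN (m+1) = tN (m+1) - s b with b = bN, s = sN. As b b = 0
  and s s = 0, the factors 1 + (-1)^m s b and 1 - (-1)^m b s of degree m + 1 multiply, in either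
  order, to (-1)^(m+1) KN (m+1); so the first one is invertible, hence so is 1 + (-1)^m b s,
  which is (-1)^m tN m.\<close>

lemma invertible_tN_if_KN:
  assumes inv: "invertible C (N (Suc m)) (KN (Suc m))"
  shows "invertible C (N m) (tN m)"
proof -
  let ?one = "eN (Suc m)"
  let ?X = "cmp (bN (Suc m)) (sN (Suc m))"
  let ?Y = "cmp (sN m) (bN m)"
  let ?x = "pls ?one (msgn C m ?Y)"
  let ?y = "msub C ?one (msgn C m ?X)"
  have KN: "KN (Suc m) = msub C (pls ?X (msgn C (Suc m) ?one)) ?Y"
    unfolding KN_Suc_eq tN_eq ..
  have xy: "cmp ?x ?y = msgn C (Suc m) (KN (Suc m))"
    unfolding KN by (cases "even m") (simp_all add: msgn_def msub_def cat_simps ngt_pls pls_ac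
        bN_bN_zero_whisker sN_sN_zero_whisker pls_zer zer_pls ngt_zer)
  have yx: "cmp ?y ?x = msgn C (Suc m) (KN (Suc m))"
    unfolding KN by (cases "even m") (simp_all add: msgn_def msub_def cat_simps ngt_pls pls_ac
        bN_bN_zero_whisker sN_sN_zero_whisker pls_zer zer_pls ngt_zer)
  have "invertible C (N (Suc m)) ?x"
    by (rule invertible_commuting_factor[OF _ _ xy yx]) (simp_all add: hom_iff invertible_msgn inv)
  then have "invertible C (N (Suc m)) (pls ?one (cmp (sN m) (msgn C m (bN m))))"
    by (simp add: cmp_msgn)
  then have "invertible C (N m) (pls (eN m) (cmp (msgn C m (bN m)) (sN m)))"
    by (rule invertible_one_plus_swap[rotated 2]) (simp_all add: hom_iff)
  then have "invertible C (N m) (msgn C m (pls (eN m) (cmp (msgn C m (bN m)) (sN m))))"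
    by (simp add: invertible_msgn)
  moreover have "msgn C m (pls (eN m) (cmp (msgn C m (bN m)) (sN m))) = tN m"
    unfolding tN_eq by (simp add: msgn_pls msgn_cmp pls_comm)
  ultimately show ?thesis by simp
qed

text \<open>Given an inverse U of T m, the morphism below inverts T (m + 1) on the complement of the
  normalized part: 1 - pp (k + 1) = (1 - pp k) + pp k s_k d_(k+1), and T commutes with the
  faces, the degeneracies and the factors of pp.\<close>

primrec degenerate_inverse :: "nat \<Rightarrow> 'm \<Rightarrow> nat \<Rightarrow> 'm" where
  "degenerate_inverse m U 0 = zer (Mo (Suc m)) (Mo (Suc m))"
| "degenerate_inverse m U (Suc k) =
     pls (degenerate_inverse m U k) (cmp (pp (Suc m) k) (cmp (s m k) (cmp U (d m (Suc k)))))"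

lemma degenerate_inverse_ty:
  "ar U \<Longrightarrow> dm U = Mo m \<Longrightarrow> cd U = Mo m \<Longrightarrow>
   ar (degenerate_inverse m U k) \<and> dm (degenerate_inverse m U k) = Mo (Suc m)
   \<and> cd (degenerate_inverse m U k) = Mo (Suc m)"
  by (induction k) simp_all

lemma T_pprod_whisker: "ar x \<Longrightarrow> cd x = Mo (Suc m) \<Longrightarrow>
  cmp (T (Suc m)) (cmp (pp (Suc m) k) x) = cmp (pp (Suc m) k) (cmp (T (Suc m)) x)"
  by (rule cmp_eq_whisker[OF T_pprod_commute]) simp_all

lemma T_degenerate_inverse:
  assumes U: "ar U" "dm U = Mo m" "cd U = Mo m" "cmp U (T m) = one m" "cmp (T m) U = one m"
  shows "k \<le> Suc m \<Longrightarrow>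
      cmp (T (Suc m)) (degenerate_inverse m U k) = msub C (one (Suc m)) (pp (Suc m) k)
    \<and> cmp (degenerate_inverse m U k) (T (Suc m)) = msub C (one (Suc m)) (pp (Suc m) k)"
proof (induction k)
  case 0
  then show ?case using U by (simp add: cmp_zer zer_cmp sub_self)
next
  case (Suc k)
  have UT: "cmp U (cmp (T m) x) = x" and TU: "cmp (T m) (cmp U x) = x" if "ar x" "cd x = Mo m" for x
    using that U by (simp_all add: cmp_assoc[symmetric] id_cmp)
  have "msub C (one (Suc m)) (pp (Suc m) (Suc k)) =
     pls (msub C (one (Suc m)) (pp (Suc m) k)) (cmp (pp (Suc m) k) (cmp (s m k) (d m (Suc k))))"
    by (simp add: pf_Suc msub_def cat_simps ngt_pls pls_ac)
  moreover have "cmp (T (Suc m)) (cmp (pp (Suc m) k) (cmp (s m k) (cmp U (d m (Suc k)))))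
      = cmp (pp (Suc m) k) (cmp (s m k) (d m (Suc k)))"
    using U by (simp add: T_pprod_whisker T_s_whisker TU)
  moreover have "cmp (cmp (pp (Suc m) k) (cmp (s m k) (cmp U (d m (Suc k))))) (T (Suc m))
      = cmp (pp (Suc m) k) (cmp (s m k) (d m (Suc k)))"
    using U by (simp add: cat_simps T_d_commute UT)
  ultimately show ?case
    using Suc degenerate_inverse_ty[OF U(1-3), of k] U
    by (simp add: cmp_pls_distrib pls_cmp_distrib)
qed

lemma invertible_T_if_TN:
  assumes inv: "invertible C (N n) (TN n)" and IH: "\<And>m. n = Suc m \<Longrightarrow> invertible C (Mo m) (T m)"
  shows "invertible C (Mo n) (T n)"
proof -
  obtain w where w: "w \<in> hom C (N n) (N n)" "cmp w (TN n) = eN n" "cmp (TN n) w = eN n"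
    using inv unfolding invertible_def by blast
  let ?A = "cmp (iota n) (cmp w (r n))"
  have A: "cmp (T n) ?A = P n" "cmp ?A (T n) = P n"
    using inverse_of_restriction[OF splitting_hom _ w(1)] w(2,3)
    by (simp_all add: hom_iff r_iota iota_r T_P_commute TN_def)
  have A_ty: "ar ?A" "dm ?A = Mo n" "cd ?A = Mo n" using w by (simp_all add: hom_iff)
  show ?thesis
  proof (cases n)
    case 0
    then have "P n = one n" by (simp add: pmap_def)
    then show ?thesis by (intro invertibleI[of _ _ ?A ?A]) (use A A_ty in \<open>auto simp: hom_iff\<close>)
  next
    case (Suc m)
    obtain U where U: "U \<in> hom C (Mo m) (Mo m)" "cmp U (T m) = one m" "cmp (T m) U = one m"
      using IH[OF Suc] unfolding invertible_def by blast
    let ?Z = "degenerate_inverse m U (Suc m)"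
    have Z: "cmp (T n) ?Z = msub C (one n) (P n)" "cmp ?Z (T n) = msub C (one n) (P n)"
      using T_degenerate_inverse[OF _ _ _ U(2,3), of "Suc m"] U(1) Suc
      by (simp_all add: hom_iff pmap_def del: pprod.simps)
    have Z_ty: "ar ?Z" "dm ?Z = Mo n" "cd ?Z = Mo n"
      using degenerate_inverse_ty[of U m "Suc m"] U(1) Suc by (auto simp: hom_iff)
    show ?thesis
    proof (rule invertibleI[of _ _ "pls ?A ?Z" "pls ?A ?Z"])
      show "cmp (pls ?A ?Z) (T n) = one n"
        using A_ty Z_ty
        by (simp add: pls_cmp_distrib A Z pls_sub_cancel del: degenerate_inverse.simps)
      show "cmp (T n) (pls ?A ?Z) = one n"
        using A_ty Z_ty
        by (simp add: cmp_pls_distrib A Z pls_sub_cancel del: degenerate_inverse.simps)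
    qed (use A_ty Z_ty in \<open>auto simp: hom_iff\<close>)
  qed
qed

lemma paracyclic_iff:
  "paracyclic C Mo Mm \<longleftrightarrow> (\<forall>n. invertible C (N n) (cmp (r n) (cmp (kappa C Mm n) (iota n))))"
proof
  assume "paracyclic C Mo Mm"
  then have "invertible C (N n) (KN n)" for n
    unfolding paracyclic_def by (meson invertible_KN_if_TN invertible_TN_if_T invertible_T_iff_t)
  then show "\<forall>n. invertible C (N n) (cmp (r n) (cmp (kappa C Mm n) (iota n)))"
    by (simp add: r_kappa_iota invertible_msgn)
next
  assume "\<forall>n. invertible C (N n) (cmp (r n) (cmp (kappa C Mm n) (iota n)))"
  then have KN: "invertible C (N n) (KN n)" for n
    by (simp add: r_kappa_iota invertible_msgn)
  have "invertible C (Mo n) (T n)" for n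
  proof (induction n rule: less_induct)
    case (less n)
    show ?case
      by (rule invertible_T_if_TN)
        (use less invertible_TN_if_KN_tN[OF KN invertible_tN_if_KN[OF KN]] in auto)
  qed
  then show "paracyclic C Mo Mm" unfolding paracyclic_def by (simp add: invertible_T_iff_t)
qed

end

theorem mainTheorem1:
  fixes C :: "('o, 'm) cat_data"
    and Mo :: "nat \<Rightarrow> 'o" and Mm :: "nat \<Rightarrow> nat \<Rightarrow> (int \<Rightarrow> int) \<Rightarrow> 'm"
    and N :: "nat \<Rightarrow> 'o" and iota :: "nat \<Rightarrow> 'm" and r :: "nat \<Rightarrow> 'm"
  assumes "additive_cat C"
    and "weakly_idem_complete C"
    and "duplicial C Mo Mm"
    and "\<forall>n. N n \<in> c_ob C \<and> iota n \<in> hom C (N n) (Mo n) \<and> r n \<in> hom C (Mo n) (N n)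
              \<and> c_cmp C (r n) (iota n) = c_idt C (N n)
              \<and> c_cmp C (iota n) (r n) = pmap C Mo Mm n"
  shows "(paracyclic C Mo Mm \<longleftrightarrow>
           (\<forall>n. invertible C (N n) (c_cmp C (r n) (c_cmp C (kappa C Mm n) (iota n)))))
       \<and> (cyclic C Mo Mm \<longleftrightarrow>
           (\<forall>n. c_cmp C (r n) (c_cmp C (piop C Mo Mm n) (iota n)) = c_idt C (N n)))"
proof -
  \<comment> \<open>Weak idempotent completeness only serves to make the splittings of p_n exist; here they
    are given.\<close>
  have "preadditive C" using assms(1) unfolding additive_cat_def by blast
  then interpret split_duplicial C Mo Mm N iota r
    using assms(3,4) by unfold_locales auto
  show ?thesis using paracyclic_iff cyclic_iff by simp
qed

end
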